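(* Let $T:\mathcal{B}(\mathcal{H}_2)\to\mathcal{B}(\mathcal{H}_1)$ be a channel. Let $(n_\alpha)_{\alpha\in\mathbb{N}}$ be a strictly increasing sequence of positive integers such that $\lim_{\alpha\to\infty} n_{\alpha+1}/n_\alpha=1$, and let $M_\alpha$ be positive integers such that $\lim_{\alpha\to\infty}\Delta(T^{\otimes n_\alpha},M_\alpha)=0$. Then every $c\ge 0$ with $$c<\liminf_{\alpha\to\infty}\frac{\log_2 M_\alpha}{n_\alpha}$$ is an achievable rate for $T$. Moreover, if in addition there are constants $\mu,\lambda\ge 0$ with $\Delta(T^{\otimes n_\alpha},M_\alpha)\le \mu e^{-\lambda n_\alpha}$ for all $\alpha$, then for every such $c$ $$\liminf_{n\to\infty}\frac{-1}{n}\log\Delta\bigl(T^{\otimes n},\lfloor 2^{cn}\rfloor\bigr)\ge\lambda .$$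
   Context: All Hilbert spaces are finite dimensional; $\mathcal{B}(\mathcal{H})$ denotes the linear operators on $\mathcal{H}$. A channel with input space $\mathcal{H}_1$ and output space $\mathcal{H}_2$ is a completely positive unital linear map $T:\mathcal{B}(\mathcal{H}_2)\to\mathcal{B}(\mathcal{H}_1)$ (Heisenberg picture). For a linear map $S:\mathcal{B}(\mathcal{K}_2)\to\mathcal{B}(\mathcal{K}_1)$ its cb-norm is $\|S\|_{cb}=\sup\{\|(S\otimes \mathrm{id}_{\mathcal{B}(\mathbb{C}^k)})(A)\| : k\in\mathbb{N},\ A\in\mathcal{B}(\mathcal{K}_2\otimes\mathbb{C}^k),\ \|A\|\le1\}$. For a channel $T:\mathcal{B}(\mathcal{H}_2)\to\mathcal{B}(\mathcal{H}_1)$ and a positive integer $M$, $\Delta(T,M)=\inf_{E,D}\|E\circ T\circ D-\mathrm{id}\|_{cb}$, where $\mathcal{H}_0$ is a Hilbert space of dimension $M$, $\mathrm{id}$ is the identity map of $\mathcal{B}(\mathcal{H}_0)$, and the infimum runs over all channels $D:\mathcal{B}(\mathcal{H}_0)\to\mathcal{B}(\mathcal{H}_2)$ (decodings) and $E:\mathcal{B}(\mathcal{H}_1)\to\mathcal{B}(\mathcal{H}_0)$ (encodings). $T^{\otimes n}:\mathcal{B}(\mathcal{H}_2^{\otimes n})\to\mathcal{B}(\mathcal{H}_1^{\otimes n})$ is the $n$-fold tensor power. A number $c\ge0$ is an achievable rate for $T$ if $\lim_{n\to\infty}\Delta(T^{\otimes n},\lfloor 2^{cn}\rfloor)=0$;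 $\lfloor x\rfloor$ is the largest integer $\le x$. In the last display $\log$ is the natural logarithm. *)

theory Defs
  imports "HOL-Analysis.Analysis" "HOL-Library.Liminf_Limsup" "Jordan_Normal_Form.Matrix"
begin

text \<open>A finite-dimensional Hilbert space of dimension d is modelled as C^d, and
  B(H) as the d x d complex matrices (carrier_mat d d). A linear map
  B(K2) -> B(K1) is a function on complex matrices, considered on carrier_mat d2 d2.\<close>

definition vnorm :: "complex vec \<Rightarrow> real" where
  "vnorm v = sqrt (\<Sum>i<dim_vec v. (cmod (v $ i))\<^sup>2)"

definition opnorm :: "complex mat \<Rightarrow> real" where
  "opnorm A = Sup {vnorm (A *\<^sub>v v) | v. v \<in> carrier_vec (dim_col A) \<and> vnorm v \<le> 1}"

definition psd :: "nat \<Rightarrow> complex mat \<Rightarrow> bool" where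
  "psd d A \<longleftrightarrow> A \<in> carrier_mat d d \<and>
     (\<forall>v \<in> carrier_vec d. let z = (\<Sum>i<d. cnj (v $ i) * (A *\<^sub>v v) $ i) in Im z = 0 \<and> Re z \<ge> 0)"

definition munit :: "nat \<Rightarrow> nat \<Rightarrow> nat \<Rightarrow> complex mat" where
  "munit e b c = mat e e (\<lambda>(i,j). if i = b \<and> j = c then 1 else 0)"

text \<open>Block (b,c) of a matrix on C^d (x) C^e, index of (a,b) being a*e+b.\<close>
definition blk :: "nat \<Rightarrow> nat \<Rightarrow> complex mat \<Rightarrow> nat \<Rightarrow> nat \<Rightarrow> complex mat" where
  "blk d e A b c = mat d d (\<lambda>(a,a'). A $$ (a*e+b, a'*e+c))"

text \<open>Tensor product S1 (x) S2 of linear maps S1 : B(C^d2) -> B(C^d1),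
  S2 : B(C^e2) -> B(C^e1), as a map B(C^d2 (x) C^e2) -> B(C^d1 (x) C^e1):
  (S1 (x) S2)(A) = sum_{b,c} S1(A_bc) (x) S2(E_bc), where A = sum_{b,c} A_bc (x) E_bc.\<close>
definition map_tensor ::
  "(complex mat \<Rightarrow> complex mat) \<Rightarrow> nat \<Rightarrow> nat \<Rightarrow>
   (complex mat \<Rightarrow> complex mat) \<Rightarrow> nat \<Rightarrow> nat \<Rightarrow> complex mat \<Rightarrow> complex mat" where
  "map_tensor S1 d1 d2 S2 e1 e2 A =
     mat (d1*e1) (d1*e1) (\<lambda>(i,j).
       \<Sum>b<e2. \<Sum>c<e2. S1 (blk d2 e2 A b c) $$ (i div e1, j div e1)
                       * S2 (munit e2 b c) $$ (i mod e1, j mod e1))"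

definition ampl :: "(complex mat \<Rightarrow> complex mat) \<Rightarrow> nat \<Rightarrow> nat \<Rightarrow> nat \<Rightarrow> complex mat \<Rightarrow> complex mat" where
  "ampl S d1 d2 k = map_tensor S d1 d2 (\<lambda>A. A) k k"

definition lin_map :: "(complex mat \<Rightarrow> complex mat) \<Rightarrow> nat \<Rightarrow> nat \<Rightarrow> bool" where
  "lin_map S d1 d2 \<longleftrightarrow>
     (\<forall>A \<in> carrier_mat d2 d2. S A \<in> carrier_mat d1 d1) \<and>
     (\<forall>A \<in> carrier_mat d2 d2. \<forall>B \<in> carrier_mat d2 d2. S (A + B) = S A + S B) \<and>
     (\<forall>A \<in> carrier_mat d2 d2. \<forall>z. S (z \<cdot>\<^sub>m A) = z \<cdot>\<^sub>m S A)"

definition cb_norm :: "(complex mat \<Rightarrow> complex mat) \<Rightarrow> nat \<Rightarrow> nat \<Rightarrow> real" where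
  "cb_norm S d1 d2 = Sup {opnorm (ampl S d1 d2 k A) | k A.
       k > 0 \<and> A \<in> carrier_mat (d2*k) (d2*k) \<and> opnorm A \<le> 1}"

text \<open>Channel with input space C^d1 and output space C^d2 (Heisenberg picture):
  completely positive unital linear map T : B(C^d2) -> B(C^d1).\<close>
definition channel :: "(complex mat \<Rightarrow> complex mat) \<Rightarrow> nat \<Rightarrow> nat \<Rightarrow> bool" where
  "channel T d1 d2 \<longleftrightarrow> lin_map T d1 d2 \<and> T (1\<^sub>m d2) = 1\<^sub>m d1 \<and>
     (\<forall>k>0. \<forall>A. psd (d2*k) A \<longrightarrow> psd (d1*k) (ampl T d1 d2 k A))"

definition Delta :: "(complex mat \<Rightarrow> complex mat) \<Rightarrow> nat \<Rightarrow> nat \<Rightarrow> nat \<Rightarrow> real" where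
  "Delta T d1 d2 M = Inf {cb_norm (\<lambda>A. E (T (D A)) - A) M M | E D.
       channel D d2 M \<and> channel E M d1}"

text \<open>n-fold tensor power T^{(x)n} : B((C^d2)^{(x)n}) -> B((C^d1)^{(x)n}),
  with (C^d)^{(x)(n+1)} = (C^d)^{(x)n} (x) C^d.\<close>
fun tpow :: "(complex mat \<Rightarrow> complex mat) \<Rightarrow> nat \<Rightarrow> nat \<Rightarrow> nat \<Rightarrow> complex mat \<Rightarrow> complex mat" where
  "tpow T d1 d2 0 = (\<lambda>A. A)"
| "tpow T d1 d2 (Suc n) = map_tensor (tpow T d1 d2 n) (d1^n) (d2^n) T d1 d2"

definition DeltaPow :: "(complex mat \<Rightarrow> complex mat) \<Rightarrow> nat \<Rightarrow> nat \<Rightarrow> nat \<Rightarrow> nat \<Rightarrow> real" where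
  "DeltaPow T d1 d2 n M = Delta (tpow T d1 d2 n) (d1^n) (d2^n) M"

definition achievable :: "(complex mat \<Rightarrow> complex mat) \<Rightarrow> nat \<Rightarrow> nat \<Rightarrow> real \<Rightarrow> bool" where
  "achievable T d1 d2 c \<longleftrightarrow> c \<ge> 0 \<and>
     (\<lambda>n. DeltaPow T d1 d2 n (nat \<lfloor>2 powr (c * real n)\<rfloor>)) \<longlonglongrightarrow> 0"

definition neglog_rate :: "nat \<Rightarrow> real \<Rightarrow> ereal" where
  "neglog_rate n x = (if x = 0 then \<infinity> else ereal (- ln x / real n))"

end

theory Submission
  imports Defs
begin

text \<open>
  Write \<open>\<Delta>(n, M)\<close> for \<open>\<Delta>(T\<^sup>\<otimes>\<^sup>n, M)\<close>. It is nonincreasing in \<open>n\<close> and nondecreasing in \<open>M\<close>.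
  For the first, a code for \<open>T\<^sup>\<otimes>\<^sup>n\<close> serves \<open>T\<^sup>\<otimes>\<^sup>n \<otimes> T\<close>: encode \<open>X\<close> as \<open>X \<otimes> 1\<close> and evaluate
  the extra output factor in a fixed pure state, which reproduces the old code because \<open>T\<close> is
  unital. For the second, a code of size \<open>M\<close> is restricted to an \<open>m\<close>-dimensional subspace by
  compressing to the upper left corner and padding with \<open>A \<mapsto> A \<oplus> A\<^sub>0\<^sub>0 1\<close>; both maps are
  complete contractions.

  Given \<open>k\<close>, let \<open>\<alpha>\<close> be the last index with \<open>n \<alpha> \<le> k\<close>. Since \<open>n (\<alpha> + 1) / n \<alpha> \<rightarrow> 1\<close> and \<open>c\<close>
  lies below the liminf of the rates, eventually \<open>2 powr (c k) < M \<alpha>\<close>, hence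
  \<open>\<Delta>(k, \<lfloor>2 powr (c k)\<rfloor>) \<le> \<Delta>(n \<alpha>, M \<alpha>)\<close>. This gives achievability, and since
  \<open>n \<alpha> / k \<rightarrow> 1\<close> it turns the bound \<open>\<mu> exp (-\<lambda> n \<alpha>)\<close> into the error exponent \<open>\<lambda>\<close>.
\<close>

lemma sum_lessThan_mult:
  fixes g :: "nat \<Rightarrow> 'a::comm_monoid_add"
  shows "(\<Sum>i<m*k. g i) = (\<Sum>x<m. \<Sum>b<k. g (x*k+b))"
  by (simp add: sum.nat_group[symmetric] sum.shift_bounds_nat_ivl[where m=0, simplified]
      atLeast0LessThan add.commute)

lemma sum_block_le:
  fixes h :: "nat \<Rightarrow> real"
  assumes "\<And>r. 0 \<le> h r" "x < m"
  shows "(\<Sum>b<k. h (x*k+b)) \<le> (\<Sum>r<m*k. h r)"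
  unfolding sum_lessThan_mult using assms
  by (intro member_le_sum[where f="\<lambda>x. \<Sum>b<k. h (x*k+b)"]) (auto intro: sum_nonneg)

lemma sum_lessThan_if_less:
  fixes h :: "nat \<Rightarrow> 'a::comm_monoid_add"
  assumes "n \<le> N"
  shows "(\<Sum>j<N. if j < n then h j else 0) = (\<Sum>j<n. h j)"
  using assms by (intro sum.mono_neutral_cong_right) auto

lemma sum_delta_pair:
  assumes "finite B" "finite C"
  shows "(\<Sum>b\<in>B. \<Sum>c\<in>C. if p = b \<and> q = c then F b c else 0) = (if p \<in> B \<and> q \<in> C then F p q else 0)"
proof -
  have "(\<Sum>b\<in>B. \<Sum>c\<in>C. if p = b \<and> q = c then F b c else 0)
      = (\<Sum>b\<in>B. if p = b then (\<Sum>c\<in>C. if q = c then F b c else 0) else 0)"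
    by (intro sum.cong refl) auto
  also have "\<dots> = (if p \<in> B \<and> q \<in> C then F p q else 0)"
    using assms by simp
  finally show ?thesis .
qed

lemma sum_kronecker:
  fixes a :: complex
  assumes "finite S"
  shows "(\<Sum>s\<in>S. cnj (if x = s then 1 else 0) * a * (if y = s then 1 else 0))
       = (if x = y \<and> x \<in> S then a else 0)"
proof -
  have "(\<Sum>s\<in>S. cnj (if x = s then 1 else 0) * a * (if y = s then 1 else 0))
      = (\<Sum>s\<in>S. if x = s then (if y = s then a else 0) else 0)"
    by (rule sum.cong) auto
  also have "\<dots> = (if x \<in> S then (if y = x then a else 0) else 0)"
    using assms by (rule sum.delta')
  finally show ?thesis by auto
qed

lemma mult_add_less_mult:
  fixes x p c k :: nat
  assumes "x < c" "p < k"
  shows "x*k + p < c*k"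
proof -
  have "Suc x * k \<le> c * k" using assms(1) by (intro mult_le_mono1) simp
  then show ?thesis using assms(2) by simp
qed

section \<open>Euclidean norm and operator norm\<close>

definition l2norm :: "nat \<Rightarrow> (nat \<Rightarrow> complex) \<Rightarrow> real" where
  "l2norm n f = L2_set (\<lambda>i. cmod (f i)) {..<n}"

lemma l2norm_nonneg: "0 \<le> l2norm n f"
  by (simp add: l2norm_def)

lemma l2norm_cong: "(\<And>i. i < n \<Longrightarrow> f i = g i) \<Longrightarrow> l2norm n f = l2norm n g"
  unfolding l2norm_def by (rule L2_set_cong) auto

lemma l2norm_power2: "(l2norm n f)\<^sup>2 = (\<Sum>i<n. (cmod (f i))\<^sup>2)"
  by (simp add: l2norm_def L2_set_def sum_nonneg)

lemma l2norm_le_iff: "l2norm n f \<le> l2norm m g \<longleftrightarrow> (\<Sum>i<n. (cmod (f i))\<^sup>2) \<le> (\<Sum>i<m. (cmod (g i))\<^sup>2)"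
  by (simp add: l2norm_def L2_set_def)

lemma l2norm_le_1_iff: "l2norm n f \<le> 1 \<longleftrightarrow> (\<Sum>i<n. (cmod (f i))\<^sup>2) \<le> 1"
  by (simp add: l2norm_def L2_set_def)

lemma norm_le_l2norm: "j < n \<Longrightarrow> cmod (f j) \<le> l2norm n f"
  unfolding l2norm_def by (rule member_le_L2_set) auto

lemma l2norm_add_le: "l2norm n (\<lambda>i. f i + g i) \<le> l2norm n f + l2norm n g"
proof -
  have "l2norm n (\<lambda>i. f i + g i) \<le> L2_set (\<lambda>i. cmod (f i) + cmod (g i)) {..<n}"
    unfolding l2norm_def by (rule L2_set_mono) (auto simp: norm_triangle_ineq)
  also have "\<dots> \<le> l2norm n f + l2norm n g"
    unfolding l2norm_def by (rule L2_set_triangle_ineq)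
  finally show ?thesis .
qed

lemma l2norm_sum_le:
  "finite S \<Longrightarrow> l2norm n (\<lambda>i. \<Sum>s\<in>S. f s i) \<le> (\<Sum>s\<in>S. l2norm n (f s))"
proof (induct S rule: finite_induct)
  case (insert s S)
  then show ?case
    using l2norm_add_le[of n "f s" "\<lambda>i. \<Sum>s\<in>S. f s i"] by simp
qed (simp add: l2norm_def L2_set_0')

lemma l2norm_scale: "l2norm n (\<lambda>i. c * f i) = cmod c * l2norm n f"
  unfolding l2norm_def by (simp add: norm_mult L2_set_right_distrib)

lemma vnorm_eq_l2norm: "vnorm v = l2norm (dim_vec v) (vec_index v)"
  by (simp add: vnorm_def l2norm_def L2_set_def)

definition mat_app :: "complex mat \<Rightarrow> nat \<Rightarrow> (nat \<Rightarrow> complex) \<Rightarrow> nat \<Rightarrow> complex" where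
  "mat_app A c f i = (\<Sum>j<c. A $$ (i,j) * f j)"

lemma mult_mat_vec_eq_mat_app:
  assumes "A \<in> carrier_mat r c" "v \<in> carrier_vec c" "i < r"
  shows "(A *\<^sub>v v) $ i = mat_app A c (vec_index v) i"
proof -
  have "(A *\<^sub>v v) $ i = (\<Sum>j\<in>{0..<c}. row A i $ j * v $ j)"
    using assms by (simp add: scalar_prod_def)
  also have "\<dots> = mat_app A c (vec_index v) i"
    using assms by (auto simp: mat_app_def atLeast0LessThan intro!: sum.cong)
  finally show ?thesis .
qed

lemma vnorm_mult_mat_vec:
  assumes "A \<in> carrier_mat r c" "v \<in> carrier_vec c"
  shows "vnorm (A *\<^sub>v v) = l2norm r (mat_app A c (vec_index v))"
  unfolding vnorm_eq_l2norm using assms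
  by (auto intro!: l2norm_cong simp: mult_mat_vec_eq_mat_app simp del: index_mult_mat_vec)

lemma opnorm_eq_Sup:
  assumes "A \<in> carrier_mat r c"
  shows "opnorm A = Sup {l2norm r (mat_app A c f) | f. l2norm c f \<le> 1}"
proof -
  have "{vnorm (A *\<^sub>v v) | v. v \<in> carrier_vec (dim_col A) \<and> vnorm v \<le> 1}
      = {l2norm r (mat_app A c f) | f. l2norm c f \<le> 1}" (is "?V = ?F")
  proof
    show "?V \<subseteq> ?F"
    proof
      fix x assume "x \<in> ?V"
      then obtain v where v: "x = vnorm (A *\<^sub>v v)" "v \<in> carrier_vec c" "vnorm v \<le> 1"
        using assms by auto
      have "x = l2norm r (mat_app A c (vec_index v))"
        using v(1,2) assms by (simp add: vnorm_mult_mat_vec)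
      moreover have "l2norm c (vec_index v) \<le> 1"
        using v(2,3) by (simp add: vnorm_eq_l2norm)
      ultimately show "x \<in> ?F" by blast
    qed
    show "?F \<subseteq> ?V"
    proof
      fix x assume "x \<in> ?F"
      then obtain f where f: "x = l2norm r (mat_app A c f)" "l2norm c f \<le> 1" by blast
      have "l2norm c (vec_index (vec c f)) = l2norm c f"
        "mat_app A c (vec_index (vec c f)) = mat_app A c f"
        by (auto intro: l2norm_cong simp: mat_app_def)
      moreover have "vnorm (A *\<^sub>v vec c f) = l2norm r (mat_app A c (vec_index (vec c f)))"
        using assms by (intro vnorm_mult_mat_vec) auto
      ultimately show "x \<in> ?V"
        using assms f by (auto intro!: exI[of _ "vec c f"] simp: vnorm_eq_l2norm)
    qed
  qed
  then show ?thesis by (simp add: opnorm_def)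
qed

lemma l2norm_mat_app_le_entries:
  assumes "l2norm c f \<le> 1"
  shows "l2norm r (mat_app A c f) \<le> (\<Sum>i<r. \<Sum>j<c. cmod (A $$ (i,j)))"
proof -
  have "l2norm r (mat_app A c f) \<le> (\<Sum>i<r. cmod (mat_app A c f i))"
    unfolding l2norm_def by (rule L2_set_le_sum) auto
  also have "\<dots> \<le> (\<Sum>i<r. \<Sum>j<c. cmod (A $$ (i,j) * f j))"
    unfolding mat_app_def by (intro sum_mono norm_sum)
  also have "\<dots> \<le> (\<Sum>i<r. \<Sum>j<c. cmod (A $$ (i,j)))"
  proof (intro sum_mono)
    fix i j assume "j \<in> {..<c}"
    then have "cmod (f j) \<le> 1" using norm_le_l2norm[of j c f] assms by simp
    then show "cmod (A $$ (i,j) * f j) \<le> cmod (A $$ (i,j))"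
      by (simp add: norm_mult mult_left_le)
  qed
  finally show ?thesis .
qed

lemma opnorm_set_bdd:
  "bdd_above {l2norm r (mat_app A c f) | f. l2norm c f \<le> 1}"
  by (rule bdd_aboveI[where M="\<Sum>i<r. \<Sum>j<c. cmod (A $$ (i,j))"])
    (auto intro: l2norm_mat_app_le_entries)

lemma l2norm_mat_app_le_opnorm:
  assumes "A \<in> carrier_mat r c" "l2norm c f \<le> 1"
  shows "l2norm r (mat_app A c f) \<le> opnorm A"
  unfolding opnorm_eq_Sup[OF assms(1)] using assms(2)
  by (intro cSup_upper[OF _ opnorm_set_bdd]) auto

lemma opnorm_nonneg:
  assumes "A \<in> carrier_mat r c"
  shows "0 \<le> opnorm A"
proof -
  have "l2norm c (\<lambda>_. 0) \<le> 1" by (simp add: l2norm_def L2_set_0')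
  then show ?thesis
    using l2norm_mat_app_le_opnorm[OF assms] l2norm_nonneg order_trans by blast
qed

lemma opnorm_leI:
  assumes "A \<in> carrier_mat r c" "\<And>f. l2norm c f \<le> 1 \<Longrightarrow> l2norm r (mat_app A c f) \<le> t"
  shows "opnorm A \<le> t"
  unfolding opnorm_eq_Sup[OF assms(1)] using assms(2)
  by (intro cSup_least) (auto intro!: exI[of _ "\<lambda>_. 0"] simp: l2norm_def L2_set_0')

lemma opnorm_zero_mat: "opnorm (0\<^sub>m r c) = 0"
proof -
  have "opnorm (0\<^sub>m r c) \<le> 0"
    by (rule opnorm_leI[of _ r c]) (simp_all add: mat_app_def l2norm_def L2_set_0')
  then show ?thesis using opnorm_nonneg[of "0\<^sub>m r c" r c] by simp
qed

lemma l2norm_mat_app_le: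
  assumes "A \<in> carrier_mat r c"
  shows "l2norm r (mat_app A c f) \<le> opnorm A * l2norm c f"
proof (cases "l2norm c f = 0")
  case True
  then have "\<forall>j<c. f j = 0" using norm_le_l2norm[of _ c f] by (metis norm_le_zero_iff)
  then have "mat_app A c f = (\<lambda>i. 0)" by (simp add: fun_eq_iff mat_app_def)
  then show ?thesis using True by (simp add: l2norm_def L2_set_0')
next
  case False
  define s where "s = l2norm c f"
  have s: "s > 0" using False l2norm_nonneg[of c f] by (simp add: s_def)
  have scale: "l2norm n (\<lambda>i. complex_of_real (1/s) * g i) = l2norm n g / s" for n g
    using s by (simp only: l2norm_scale norm_of_real) simp
  have "mat_app A c (\<lambda>j. complex_of_real (1/s) * f j) = (\<lambda>i. complex_of_real (1/s) * mat_app A c f i)"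
    by (simp add: fun_eq_iff mat_app_def sum_distrib_left mult_ac)
  moreover have "l2norm r (mat_app A c (\<lambda>j. complex_of_real (1/s) * f j)) \<le> opnorm A"
    using s by (intro l2norm_mat_app_le_opnorm[OF assms]) (simp only: scale, simp add: s_def)
  ultimately have "l2norm r (mat_app A c f) / s \<le> opnorm A" by (simp only: scale)
  then show ?thesis using s by (simp add: s_def field_simps)
qed

section \<open>Positive semidefinite matrices\<close>

definition qform :: "nat \<Rightarrow> complex mat \<Rightarrow> (nat \<Rightarrow> complex) \<Rightarrow> complex" where
  "qform d A f = (\<Sum>i<d. \<Sum>j<d. cnj (f i) * A $$ (i,j) * f j)"

lemma qform_vec_index:
  assumes "A \<in> carrier_mat d d" "v \<in> carrier_vec d"
  shows "(\<Sum>i<d. cnj (v $ i) * (A *\<^sub>v v) $ i) = qform d A (vec_index v)"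
  using assms unfolding qform_def
  by (auto simp: mult_mat_vec_eq_mat_app mat_app_def sum_distrib_left mult.assoc
      simp del: index_mult_mat_vec intro!: sum.cong)

lemma psd_iff_qform:
  "psd d A \<longleftrightarrow> A \<in> carrier_mat d d \<and> (\<forall>f. Im (qform d A f) = 0 \<and> 0 \<le> Re (qform d A f))"
proof (cases "A \<in> carrier_mat d d")
  case True
  have "qform d A (vec_index (vec d f)) = qform d A f" for f
    unfolding qform_def by (intro sum.cong) auto
  then have "(\<forall>v \<in> carrier_vec d. P (qform d A (vec_index v))) \<longleftrightarrow> (\<forall>f. P (qform d A f))" for P
    by (metis vec_carrier)
  from this[of "\<lambda>z. Im z = 0 \<and> 0 \<le> Re z"] show ?thesis
    unfolding psd_def Let_def using qform_vec_index[OF True] True by simp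
qed (simp add: psd_def)

lemma sum_pushforward:
  fixes F :: "nat \<Rightarrow> complex" and g :: "'a \<Rightarrow> nat"
  assumes "g ` I \<subseteq> {..<m}"
  shows "(\<Sum>x<m. F x * (\<Sum>i\<in>I. if g i = x then h i else 0)) = (\<Sum>i\<in>I. F (g i) * h i)"
proof -
  have "(\<Sum>x<m. F x * (\<Sum>i\<in>I. if g i = x then h i else 0))
      = (\<Sum>x<m. \<Sum>i\<in>I. if g i = x then F x * h i else 0)"
    by (simp add: sum_distrib_left if_distrib[of "\<lambda>z. F _ * z"] cong: if_cong)
  also have "\<dots> = (\<Sum>i\<in>I. \<Sum>x<m. if g i = x then F x * h i else 0)"
    by (rule sum.swap)
  also have "\<dots> = (\<Sum>i\<in>I. F (g i) * h i)"
    using assms by (intro sum.cong refl) (auto simp: sum.delta)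
  finally show ?thesis .
qed

lemma qform_pushforward:
  fixes g :: "nat \<Rightarrow> nat"
  assumes "\<And>i. i < N \<Longrightarrow> g i < m"
  shows "qform m A (\<lambda>x. \<Sum>i<N. if g i = x then h i else 0)
       = (\<Sum>i<N. \<Sum>j<N. cnj (h i) * A $$ (g i, g j) * h j)"
proof -
  have g: "g ` {..<N} \<subseteq> {..<m}" using assms by auto
  define \<phi> where "\<phi> = (\<lambda>x. \<Sum>i<N. if g i = x then h i else 0)"
  define \<psi> where "\<psi> = (\<lambda>x. \<Sum>j<N. A $$ (x, g j) * h j)"
  have "qform m A \<phi> = (\<Sum>x<m. cnj (\<phi> x) * (\<Sum>y<m. A $$ (x,y) * \<phi> y))"
    by (simp add: qform_def sum_distrib_left mult.assoc)
  also have "\<dots> = (\<Sum>x<m. \<psi> x * (\<Sum>i<N. if g i = x then cnj (h i) else 0))"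
  proof (intro sum.cong refl)
    fix x
    have "(\<Sum>y<m. A $$ (x,y) * \<phi> y) = \<psi> x"
      unfolding \<phi>_def \<psi>_def using sum_pushforward[OF g, where F="\<lambda>y. A $$ (x,y)" and h=h] by simp
    moreover have "cnj (\<phi> x) = (\<Sum>i<N. if g i = x then cnj (h i) else 0)"
      by (simp add: \<phi>_def if_distrib[of cnj] cong: if_cong)
    ultimately show "cnj (\<phi> x) * (\<Sum>y<m. A $$ (x,y) * \<phi> y)
        = \<psi> x * (\<Sum>i<N. if g i = x then cnj (h i) else 0)"
      by simp
  qed
  also have "\<dots> = (\<Sum>i<N. \<psi> (g i) * cnj (h i))"
    using sum_pushforward[OF g, where F=\<psi> and h="\<lambda>i. cnj (h i)"] by simp
  finally show ?thesis
    unfolding \<phi>_def[symmetric] by (simp add: \<psi>_def sum_distrib_left sum_distrib_right mult_ac)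
qed

text \<open>\<open>B = \<Sum>\<^sub>s V\<^sub>s\<^sup>* A V\<^sub>s\<close> for the weighted partial maps \<open>V\<^sub>s e\<^sub>i = c s i e\<^bsub>g s i\<^esub>\<close>.\<close>

lemma psd_congruence:
  assumes A: "psd m A" and fin: "finite S"
    and g: "\<And>s i. s \<in> S \<Longrightarrow> i < N \<Longrightarrow> g s i < m"
    and B: "B \<in> carrier_mat N N"
    and B_eq: "\<And>i j. i < N \<Longrightarrow> j < N \<Longrightarrow>
        B $$ (i,j) = (\<Sum>s\<in>S. cnj (c s i) * A $$ (g s i, g s j) * c s j)"
  shows "psd N B"
proof -
  define v where "v f s x = (\<Sum>i<N. if g s i = x then c s i * f i else 0)" for f s x
  have "qform N B f = (\<Sum>s\<in>S. qform m A (v f s))" for f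
  proof -
    have "qform N B f = (\<Sum>s\<in>S. \<Sum>i<N. \<Sum>j<N. cnj (c s i * f i) * A $$ (g s i, g s j) * (c s j * f j))"
      unfolding qform_def
      by (simp add: B_eq sum_distrib_left sum_distrib_right mult_ac sum.swap[of _ S])
    also have "\<dots> = (\<Sum>s\<in>S. qform m A (v f s))"
      unfolding v_def using g by (intro sum.cong refl qform_pushforward[symmetric]) auto
    finally show ?thesis .
  qed
  then show ?thesis
    using A B unfolding psd_iff_qform by (simp add: Re_sum Im_sum sum_nonneg)
qed

lemma qform_add:
  assumes "A \<in> carrier_mat d d" "B \<in> carrier_mat d d"
  shows "qform d (A + B) f = qform d A f + qform d B f"
  using assms by (auto simp: qform_def sum.distrib[symmetric] algebra_simps intro!: sum.cong)

lemma psd_add: "psd d A \<Longrightarrow> psd d B \<Longrightarrow> psd d (A + B)"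
  unfolding psd_iff_qform by (simp add: qform_add)

section \<open>Amplifications and linear maps\<close>

lemma munit_index: "i < e \<Longrightarrow> j < e \<Longrightarrow> munit e b c $$ (i,j) = (if i = b \<and> j = c then 1 else 0)"
  by (simp add: munit_def)

lemma munit_carrier [simp]: "munit e b c \<in> carrier_mat e e"
  by (simp add: munit_def)

lemma blk_carrier [simp]: "blk d e A b c \<in> carrier_mat d d"
  by (simp add: blk_def)

lemma blk_index: "x < d \<Longrightarrow> y < d \<Longrightarrow> blk d e A b c $$ (x,y) = A $$ (x*e+b, y*e+c)"
  by (simp add: blk_def)

lemma ampl_carrier [simp]: "ampl S d1 d2 k A \<in> carrier_mat (d1*k) (d1*k)"
  by (simp add: ampl_def map_tensor_def)

lemma ampl_dim [simp]: "dim_row (ampl S d1 d2 k A) = d1*k" "dim_col (ampl S d1 d2 k A) = d1*k"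
  by (simp_all add: ampl_def map_tensor_def)

lemma index_ampl:
  assumes "i < d1*k" "j < d1*k"
  shows "ampl S d1 d2 k A $$ (i,j) = S (blk d2 k A (i mod k) (j mod k)) $$ (i div k, j div k)"
proof -
  define F where "F b c = S (blk d2 k A b c) $$ (i div k, j div k)" for b c
  have k: "0 < k" using assms by (cases k) auto
  have "ampl S d1 d2 k A $$ (i,j) = (\<Sum>b<k. \<Sum>c<k. if i mod k = b \<and> j mod k = c then F b c else 0)"
    using assms k by (simp add: ampl_def map_tensor_def F_def munit_index if_distrib[of "\<lambda>x. _ * x"] cong: if_cong)
  also have "\<dots> = F (i mod k) (j mod k)"
    using k by (simp add: sum_delta_pair)
  finally show ?thesis by (simp add: F_def)
qed

lemma blk_ampl:
  assumes "p < k" "q < k" "\<And>X. X \<in> carrier_mat b b \<Longrightarrow> G X \<in> carrier_mat c c"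
  shows "blk c k (ampl G c b k A) p q = G (blk b k A p q)"
proof -
  have G: "G (blk b k A p q) \<in> carrier_mat c c" using assms(3) by simp
  show ?thesis
  proof (rule eq_matI)
    fix x y assume "x < dim_row (G (blk b k A p q))" "y < dim_col (G (blk b k A p q))"
    then have "x < c" "y < c" using G by auto
    then show "blk c k (ampl G c b k A) p q $$ (x,y) = G (blk b k A p q) $$ (x,y)"
      using assms(1,2) mult_add_less_mult by (simp add: blk_index index_ampl)
  qed (use G in \<open>auto simp: blk_def\<close>)
qed

lemma ampl_comp:
  assumes "\<And>X. X \<in> carrier_mat b b \<Longrightarrow> G X \<in> carrier_mat c c"
  shows "ampl (\<lambda>X. F (G X)) a b k A = ampl F a c k (ampl G c b k A)"
proof (rule eq_matI)
  fix i j assume "i < dim_row (ampl F a c k (ampl G c b k A))" "j < dim_col (ampl F a c k (ampl G c b k A))"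
  then have ij: "i < a*k" "j < a*k" by auto
  then have "0 < k" by (cases k) auto
  then show "ampl (\<lambda>X. F (G X)) a b k A $$ (i,j) = ampl F a c k (ampl G c b k A) $$ (i,j)"
    using ij by (simp add: index_ampl blk_ampl[OF _ _ assms])
qed auto

lemma ampl_cong:
  assumes "\<And>X. X \<in> carrier_mat d2 d2 \<Longrightarrow> S X = S' X"
  shows "ampl S d1 d2 k A = ampl S' d1 d2 k A"
  unfolding ampl_def map_tensor_def using assms by simp

lemma cb_norm_cong:
  assumes "\<And>X. X \<in> carrier_mat d2 d2 \<Longrightarrow> S X = S' X"
  shows "cb_norm S d1 d2 = cb_norm S' d1 d2"
  unfolding cb_norm_def using ampl_cong[OF assms] by simp

lemma lin_map_carrier: "lin_map S d1 d2 \<Longrightarrow> A \<in> carrier_mat d2 d2 \<Longrightarrow> S A \<in> carrier_mat d1 d1"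
  by (simp add: lin_map_def)

lemma lin_map_add:
  "lin_map S d1 d2 \<Longrightarrow> A \<in> carrier_mat d2 d2 \<Longrightarrow> B \<in> carrier_mat d2 d2 \<Longrightarrow> S (A + B) = S A + S B"
  by (simp add: lin_map_def)

lemma lin_map_smult: "lin_map S d1 d2 \<Longrightarrow> A \<in> carrier_mat d2 d2 \<Longrightarrow> S (z \<cdot>\<^sub>m A) = z \<cdot>\<^sub>m S A"
  by (simp add: lin_map_def)

lemma lin_map_zero:
  assumes "lin_map S d1 d2"
  shows "S (0\<^sub>m d2 d2) = 0\<^sub>m d1 d1"
proof -
  have "S (0\<^sub>m d2 d2) = S (0 \<cdot>\<^sub>m 0\<^sub>m d2 d2)" by (intro arg_cong[of _ _ S] eq_matI) auto
  also have "\<dots> = 0 \<cdot>\<^sub>m S (0\<^sub>m d2 d2)" by (rule lin_map_smult[OF assms]) simp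
  also have "\<dots> = 0\<^sub>m d1 d1"
    using lin_map_carrier[OF assms, of "0\<^sub>m d2 d2"] by (intro eq_matI) auto
  finally show ?thesis .
qed

lemma lin_map_diff:
  assumes "lin_map S d1 d2" "A \<in> carrier_mat d2 d2" "B \<in> carrier_mat d2 d2"
  shows "S (A - B) = S A - S B"
proof -
  have "S (A - B) = S (A + (-1) \<cdot>\<^sub>m B)" using assms(2,3) by (intro arg_cong[of _ _ S] eq_matI) auto
  also have "\<dots> = S A + (-1) \<cdot>\<^sub>m S B"
    using assms by (simp add: lin_map_add lin_map_smult)
  also have "\<dots> = S A - S B"
    using lin_map_carrier[OF assms(1)] assms(2,3) by (intro eq_matI) auto
  finally show ?thesis .
qed

lemma lin_map_index_expansion:
  assumes S: "lin_map S d1 d2" and X: "X \<in> carrier_mat d2 d2" and ij: "i < d1" "j < d1"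
  shows "S X $$ (i,j) = (\<Sum>p<d2. \<Sum>q<d2. X $$ (p,q) * S (munit d2 p q) $$ (i,j))"
proof -
  define restr where "restr P = mat d2 d2 (\<lambda>pq. if pq \<in> P then X $$ pq else 0)" for P
  have restr_carrier: "restr P \<in> carrier_mat d2 d2" for P by (simp add: restr_def)
  have partial: "S (restr P) $$ (i,j) = (\<Sum>(p,q)\<in>P. X $$ (p,q) * S (munit d2 p q) $$ (i,j))"
    if "finite P" for P
    using that
  proof (induct P rule: finite_induct)
    case empty
    have "restr {} = 0\<^sub>m d2 d2" by (intro eq_matI) (auto simp: restr_def)
    then show ?case using lin_map_zero[OF S] ij by simp
  next
    case (insert pq P)
    obtain p q where pq: "pq = (p,q)" by fastforce
    have "restr (insert pq P) = restr P + X $$ (p,q) \<cdot>\<^sub>m munit d2 p q"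
      using insert(2) by (intro eq_matI) (auto simp: restr_def munit_def pq)
    then have "S (restr (insert pq P)) = S (restr P) + X $$ (p,q) \<cdot>\<^sub>m S (munit d2 p q)"
      by (simp add: lin_map_add[OF S] lin_map_smult[OF S] restr_carrier)
    moreover have "S (restr P) \<in> carrier_mat d1 d1" "S (munit d2 p q) \<in> carrier_mat d1 d1"
      using lin_map_carrier[OF S] restr_carrier by auto
    ultimately show ?case using insert ij by (simp add: pq)
  qed
  have "restr ({..<d2} \<times> {..<d2}) = X" using X by (intro eq_matI) (auto simp: restr_def)
  then show ?thesis using partial[of "{..<d2} \<times> {..<d2}"] by (simp add: sum.cartesian_product)
qed

lemma lin_map_comp: "lin_map F a c \<Longrightarrow> lin_map G c b \<Longrightarrow> lin_map (\<lambda>X. F (G X)) a b"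
  unfolding lin_map_def by auto

lemma lin_map_minus_id:
  assumes G: "lin_map G d d"
  shows "lin_map (\<lambda>A. G A - A) d d"
  unfolding lin_map_def
proof (intro conjI ballI allI)
  fix A B :: "complex mat" and z assume A: "A \<in> carrier_mat d d" and B: "B \<in> carrier_mat d d"
  have GA: "G A \<in> carrier_mat d d" and GB: "G B \<in> carrier_mat d d"
    using lin_map_carrier[OF G] A B by auto
  show "G A - A \<in> carrier_mat d d" using A by (rule minus_carrier_mat)
  show "G (A + B) - (A + B) = G A - A + (G B - B)"
    unfolding lin_map_add[OF G A B] using A B GA GB by (intro eq_matI) auto
  show "G (z \<cdot>\<^sub>m A) - z \<cdot>\<^sub>m A = z \<cdot>\<^sub>m (G A - A)"
    unfolding lin_map_smult[OF G A] using A GA by (intro eq_matI) (auto simp: algebra_simps)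
qed

lemma channel_lin_map: "channel T d1 d2 \<Longrightarrow> lin_map T d1 d2"
  by (simp add: channel_def)

lemma channel_comp:
  assumes F: "channel F a c" and G: "channel G c b"
  shows "channel (\<lambda>X. F (G X)) a b"
proof -
  have G_carrier: "\<And>X. X \<in> carrier_mat b b \<Longrightarrow> G X \<in> carrier_mat c c"
    using lin_map_carrier[OF channel_lin_map[OF G]] .
  have "F (G (1\<^sub>m b)) = 1\<^sub>m a" using F G by (simp add: channel_def)
  moreover have "psd (a*k) (ampl (\<lambda>X. F (G X)) a b k A)" if "k > 0" "psd (b*k) A" for k A
  proof -
    have "psd (c*k) (ampl G c b k A)" using G that by (simp add: channel_def)
    then have "psd (a*k) (ampl F a c k (ampl G c b k A))" using F that by (simp add: channel_def)
    then show ?thesis using ampl_comp[OF G_carrier, where F=F and a=a and k=k and A=A] by simp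
  qed
  ultimately show ?thesis
    using lin_map_comp[OF channel_lin_map[OF F] channel_lin_map[OF G]] by (simp add: channel_def)
qed

lemma blk_add:
  "A \<in> carrier_mat (b*e) (b*e) \<Longrightarrow> B \<in> carrier_mat (b*e) (b*e) \<Longrightarrow> p < e \<Longrightarrow> q < e \<Longrightarrow>
    blk b e (A + B) p q = blk b e A p q + blk b e B p q"
  by (intro eq_matI) (auto simp: blk_index mult_add_less_mult blk_def)

lemma blk_smult:
  "A \<in> carrier_mat (b*e) (b*e) \<Longrightarrow> p < e \<Longrightarrow> q < e \<Longrightarrow> blk b e (z \<cdot>\<^sub>m A) p q = z \<cdot>\<^sub>m blk b e A p q"
  by (intro eq_matI) (auto simp: blk_index mult_add_less_mult blk_def)

lemma lin_map_tensor:
  assumes S: "lin_map S a b"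
  shows "lin_map (map_tensor S a b T d1 d2) (a*d1) (b*d2)"
  unfolding lin_map_def
proof (intro conjI ballI allI)
  fix A B :: "complex mat" and z
  assume A: "A \<in> carrier_mat (b*d2) (b*d2)" and B: "B \<in> carrier_mat (b*d2) (b*d2)"
  have S_blk: "dim_row (S (blk b d2 X \<beta> \<gamma>)) = a" "dim_col (S (blk b d2 X \<beta> \<gamma>)) = a" for X \<beta> \<gamma>
    using lin_map_carrier[OF S, of "blk b d2 X \<beta> \<gamma>"] by auto
  have div: "i div d1 < a" if "i < a*d1" for i using that by (simp add: less_mult_imp_div_less)
  show "map_tensor S a b T d1 d2 A \<in> carrier_mat (a*d1) (a*d1)"
    by (simp add: map_tensor_def)
  show "map_tensor S a b T d1 d2 (A + B) = map_tensor S a b T d1 d2 A + map_tensor S a b T d1 d2 B"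
    using A B div
    by (intro eq_matI) (auto simp: S_blk map_tensor_def blk_add lin_map_add[OF S] sum.distrib[symmetric]
        algebra_simps intro!: sum.cong)
  show "map_tensor S a b T d1 d2 (z \<cdot>\<^sub>m A) = z \<cdot>\<^sub>m map_tensor S a b T d1 d2 A"
    using A div
    by (intro eq_matI) (auto simp: S_blk map_tensor_def blk_smult lin_map_smult[OF S] sum_distrib_left
        algebra_simps intro!: sum.cong)
qed

lemma lin_map_tpow: "lin_map (tpow T d1 d2 n) (d1^n) (d2^n)"
proof (induct n)
  case 0
  then show ?case by (simp add: lin_map_def)
next
  case (Suc n)
  then show ?case using lin_map_tensor[OF Suc] by (simp add: mult.commute)
qed

section \<open>Elementary channels\<close>

text \<open>Heisenberg picture of the channel that discards its input and prepares \<open>e\<^sub>0\<close>.\<close>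

definition prepare_e0 :: "nat \<Rightarrow> complex mat \<Rightarrow> complex mat" where
  "prepare_e0 d A = A $$ (0,0) \<cdot>\<^sub>m 1\<^sub>m d"

lemma channel_prepare_e0:
  assumes "0 < d" "0 < M"
  shows "channel (prepare_e0 d) d M"
proof -
  have lin: "lin_map (prepare_e0 d) d M"
    unfolding lin_map_def prepare_e0_def using assms by (auto intro!: eq_matI simp: algebra_simps)
  have unital: "prepare_e0 d (1\<^sub>m M) = 1\<^sub>m d"
    unfolding prepare_e0_def using assms by (intro eq_matI) auto
  have "psd (d*k) (ampl (prepare_e0 d) d M k A)" if k: "0 < k" and A: "psd (M*k) A" for k A
  proof (rule psd_congruence[OF A, of "{..<d}" _ "\<lambda>s i. i mod k" _ "\<lambda>s i. if i div k = s then 1 else 0"])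
    fix s i
    have "i mod k < k" using k by simp
    also have "k \<le> M*k" using assms by simp
    finally show "i mod k < M*k" .
  next
    fix i j assume ij: "i < d*k" "j < d*k"
    then have "i div k < d" "j div k < d" by (simp_all add: less_mult_imp_div_less)
    then show "ampl (prepare_e0 d) d M k A $$ (i,j) = (\<Sum>s\<in>{..<d}. cnj (if i div k = s then 1 else 0) *
         A $$ (i mod k, j mod k) * (if j div k = s then 1 else 0))"
      using ij k assms by (simp add: index_ampl prepare_e0_def blk_index sum_kronecker)
  qed auto
  then show ?thesis using lin unital by (simp add: channel_def)
qed

text \<open>Heisenberg picture of the isometric embedding \<open>\<complex>\<^sup>m \<subseteq> \<complex>\<^sup>M\<close>.\<close>

definition corner :: "nat \<Rightarrow> complex mat \<Rightarrow> complex mat" where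
  "corner m B = mat m m (\<lambda>(i,j). B $$ (i,j))"

lemma index_ampl_corner:
  assumes "m \<le> M" "i < m*k" "j < m*k"
  shows "ampl (corner m) m M k X $$ (i,j) = X $$ (i,j)"
proof -
  have "i div k < m" "j div k < m" using assms by (simp_all add: less_mult_imp_div_less)
  then show ?thesis using assms by (simp add: index_ampl corner_def blk_index)
qed

lemma channel_corner:
  assumes "0 < m" "m \<le> M"
  shows "channel (corner m) m M"
proof -
  have lin: "lin_map (corner m) m M"
    unfolding lin_map_def corner_def using assms by (auto intro!: eq_matI)
  have unital: "corner m (1\<^sub>m M) = 1\<^sub>m m"
    unfolding corner_def using assms by (intro eq_matI) auto
  have "psd (m*k) (ampl (corner m) m M k A)" if "0 < k" and A: "psd (M*k) A" for k A
  proof (rule psd_congruence[OF A, of "{0::nat}" _ "\<lambda>s i. i" _ "\<lambda>s i. 1"])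
    fix s i assume "i < m*k"
    also have "m*k \<le> M*k" using assms by simp
    finally show "i < M*k" .
  qed (auto simp: index_ampl_corner[OF assms(2)])
  then show ?thesis using lin unital by (simp add: channel_def)
qed

text \<open>\<open>pad M m A = A \<oplus> A\<^sub>0\<^sub>0 1\<^bsub>M-m\<^esub>\<close>: Heisenberg picture of the channel that sends the
  complement of \<open>\<complex>\<^sup>m\<close> in \<open>\<complex>\<^sup>M\<close> to \<open>e\<^sub>0\<close>.\<close>

definition pad :: "nat \<Rightarrow> nat \<Rightarrow> complex mat \<Rightarrow> complex mat" where
  "pad M m A = mat M M (\<lambda>(x,y). (if x < m \<and> y < m then A $$ (x,y) else 0)
                         + (if x = y \<and> m \<le> x then A $$ (0,0) else 0))"

lemma index_ampl_pad:
  assumes "0 < m" "m \<le> M" "i < M*k" "j < M*k"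
  shows "ampl (pad M m) M m k A $$ (i,j) = (if i div k < m \<and> j div k < m then A $$ (i,j) else 0)
     + (if i div k = j div k \<and> m \<le> i div k then A $$ (i mod k, j mod k) else 0)"
proof -
  have "i div k < M" "j div k < M" using assms by (simp_all add: less_mult_imp_div_less)
  then show ?thesis using assms by (simp add: index_ampl pad_def blk_index)
qed

lemma channel_pad:
  assumes m: "0 < m" "m \<le> M"
  shows "channel (pad M m) M m"
proof -
  have lin: "lin_map (pad M m) M m"
    unfolding lin_map_def pad_def using m by (auto intro!: eq_matI simp: algebra_simps)
  have unital: "pad M m (1\<^sub>m m) = 1\<^sub>m M"
    unfolding pad_def using m by (intro eq_matI) auto
  have "psd (M*k) (ampl (pad M m) M m k A)" if k: "0 < k" and A: "psd (m*k) A" for k A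
  proof -
    define B1 where "B1 = mat (M*k) (M*k) (\<lambda>(i,j). if i div k < m \<and> j div k < m then A $$ (i,j) else 0)"
    define B2 where "B2 = mat (M*k) (M*k) (\<lambda>(i,j).
      if i div k = j div k \<and> m \<le> i div k then A $$ (i mod k, j mod k) else 0)"
    have low: "i < m*k" if "i div k < m" for i
      using mult_add_less_mult[OF that, where p="i mod k" and k=k] k by simp
    have "psd (M*k) B1"
      by (rule psd_congruence[OF A, of "{0::nat}" _ "\<lambda>s i. if i div k < m then i else 0" _
            "\<lambda>s i. if i div k < m then 1 else 0"]) (use low m k in \<open>auto simp: B1_def\<close>)
    moreover have "psd (M*k) B2"
    proof (rule psd_congruence[OF A, of "{m..<M}" _ "\<lambda>s i. i mod k" _
          "\<lambda>s i. if i div k = s then 1 else 0"])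
      fix s i
      have "i mod k < k" using k by simp
      also have "k \<le> m*k" using m by simp
      finally show "i mod k < m*k" .
    next
      fix i j assume ij: "i < M*k" "j < M*k"
      then have "i div k < M" by (simp add: less_mult_imp_div_less)
      then show "B2 $$ (i,j) = (\<Sum>s\<in>{m..<M}. cnj (if i div k = s then 1 else 0)
          * A $$ (i mod k, j mod k) * (if j div k = s then 1 else 0))"
        using ij by (auto simp: B2_def sum_kronecker)
    qed (auto simp: B2_def)
    ultimately have "psd (M*k) (B1 + B2)" by (rule psd_add)
    moreover have "ampl (pad M m) M m k A = B1 + B2"
      by (intro eq_matI) (auto simp: B1_def B2_def index_ampl_pad[OF m])
    ultimately show ?thesis by simp
  qed
  then show ?thesis using lin unital by (simp add: channel_def)
qed

text \<open>Heisenberg picture of appending an ancilla \<open>\<complex>\<^sup>e\<close> in the state \<open>e\<^sub>0\<close>.\<close>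

definition ancilla_e0 :: "nat \<Rightarrow> nat \<Rightarrow> complex mat \<Rightarrow> complex mat" where
  "ancilla_e0 a e B = blk a e B 0 0"

lemma channel_ancilla_e0:
  assumes "0 < a" "0 < e"
  shows "channel (ancilla_e0 a e) a (a*e)"
proof -
  have ix: "x*e < a*e" if "x < a" for x using mult_add_less_mult[OF that assms(2)] by simp
  have lin: "lin_map (ancilla_e0 a e) a (a*e)"
    unfolding lin_map_def ancilla_e0_def using assms by (auto simp: blk_add blk_smult)
  have unital: "ancilla_e0 a e (1\<^sub>m (a*e)) = 1\<^sub>m a"
    unfolding ancilla_e0_def using assms ix by (intro eq_matI) (auto simp: blk_index blk_def)
  have "psd (a*k) (ampl (ancilla_e0 a e) a (a*e) k A)" if k: "0 < k" and A: "psd (a*e*k) A" for k A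
  proof (rule psd_congruence[OF A, of "{0::nat}" _ "\<lambda>s i. (i div k)*e*k + i mod k" _ "\<lambda>s i. 1"])
    fix s i assume "i < a*k"
    then have "(i div k)*e < a*e" using ix less_mult_imp_div_less by blast
    then show "(i div k)*e*k + i mod k < a*e*k" using k by (intro mult_add_less_mult) auto
  next
    fix i j assume ij: "i < a*k" "j < a*k"
    then have "i div k < a" "j div k < a" by (simp_all add: less_mult_imp_div_less)
    then show "ampl (ancilla_e0 a e) a (a*e) k A $$ (i,j)
        = (\<Sum>s\<in>{0}. cnj 1 * A $$ ((i div k)*e*k + i mod k, (j div k)*e*k + j mod k) * 1)"
      using ij k ix by (simp add: index_ampl ancilla_e0_def blk_index)
  qed auto
  then show ?thesis using lin unital by (simp add: channel_def)
qed

text \<open>\<open>tensor_id b e X = X \<otimes> 1\<^sub>e\<close>, the Heisenberg picture of the partial trace over \<open>\<complex>\<^sup>e\<close>.\<close>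

definition tensor_id :: "nat \<Rightarrow> nat \<Rightarrow> complex mat \<Rightarrow> complex mat" where
  "tensor_id b e X = mat (b*e) (b*e) (\<lambda>(p,q). if p mod e = q mod e then X $$ (p div e, q div e) else 0)"

lemma channel_tensor_id:
  assumes "0 < b" "0 < e"
  shows "channel (tensor_id b e) (b*e) b"
proof -
  have lin: "lin_map (tensor_id b e) (b*e) b"
    unfolding lin_map_def tensor_id_def by (auto intro!: eq_matI simp: less_mult_imp_div_less)
  have unital: "tensor_id b e (1\<^sub>m b) = 1\<^sub>m (b*e)"
    unfolding tensor_id_def
    by (intro eq_matI) (auto simp: less_mult_imp_div_less, metis div_mult_mod_eq)
  have "psd (b*e*k) (ampl (tensor_id b e) (b*e) b k A)" if k: "0 < k" and A: "psd (b*k) A" for k A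
  proof (rule psd_congruence[OF A, of "{..<e}" _ "\<lambda>s i. (i div k div e)*k + i mod k" _
        "\<lambda>s i. if (i div k) mod e = s then 1 else 0"])
    fix s i assume "i < b*e*k"
    then have "i div k div e < b" by (simp add: less_mult_imp_div_less div_mult2_eq mult.assoc)
    then show "(i div k div e)*k + i mod k < b*k" using k by (intro mult_add_less_mult) auto
  next
    fix i j assume ij: "i < b*e*k" "j < b*e*k"
    then have "i div k < b*e" "j div k < b*e" by (simp_all add: less_mult_imp_div_less)
    then have "i div k div e < b" "j div k div e < b" by (simp_all add: less_mult_imp_div_less)
    then show "ampl (tensor_id b e) (b*e) b k A $$ (i,j) = (\<Sum>s\<in>{..<e}.
        cnj (if (i div k) mod e = s then 1 else 0)
        * A $$ ((i div k div e)*k + i mod k, (j div k div e)*k + j mod k)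
        * (if (j div k) mod e = s then 1 else 0))"
      using ij k \<open>i div k < b*e\<close> \<open>j div k < b*e\<close> assms
      by (simp add: index_ampl tensor_id_def blk_index sum_kronecker)
  qed auto
  then show ?thesis using lin unital by (simp add: channel_def)
qed

section \<open>Complete boundedness\<close>

definition segment :: "nat \<Rightarrow> nat \<Rightarrow> (nat \<Rightarrow> complex) \<Rightarrow> nat \<Rightarrow> complex" where
  "segment k x f c = f (x*k + c)"

definition embed_block :: "nat \<Rightarrow> nat \<Rightarrow> (nat \<Rightarrow> complex) \<Rightarrow> nat \<Rightarrow> complex" where
  "embed_block k q g r = (if r div k = q then g (r mod k) else 0)"

lemma sum_power2_segment_le:
  assumes "x < m"
  shows "(\<Sum>c<k. (cmod (segment k x f c))\<^sup>2) \<le> (\<Sum>j<m*k. (cmod (f j))\<^sup>2)"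
  unfolding segment_def by (rule sum_block_le[OF _ assms]) simp

lemma sum_power2_embed_block:
  assumes "q < m"
  shows "(\<Sum>r<m*k. (cmod (embed_block k q g r))\<^sup>2) = (\<Sum>c<k. (cmod (g c))\<^sup>2)"
proof -
  have "(\<Sum>r<m*k. (cmod (embed_block k q g r))\<^sup>2)
      = (\<Sum>x<m. if x = q then (\<Sum>c<k. (cmod (g c))\<^sup>2) else 0)"
    unfolding sum_lessThan_mult by (intro sum.cong refl) (auto simp: embed_block_def)
  then show ?thesis using assms by simp
qed

lemma mat_app_embed_block:
  assumes "q < d"
  shows "mat_app A (d*k) (embed_block k q g) i = (\<Sum>c<k. A $$ (i, q*k+c) * g c)"
proof -
  have "mat_app A (d*k) (embed_block k q g) i
      = (\<Sum>x<d. if x = q then (\<Sum>c<k. A $$ (i, q*k+c) * g c) else 0)"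
    unfolding mat_app_def sum_lessThan_mult by (intro sum.cong refl) (auto simp: embed_block_def)
  then show ?thesis using assms by simp
qed

lemma sum_power2_mat_app_le:
  assumes "A \<in> carrier_mat r c"
  shows "(\<Sum>i<r. (cmod (mat_app A c f i))\<^sup>2) \<le> (opnorm A)\<^sup>2 * (\<Sum>j<c. (cmod (f j))\<^sup>2)"
proof -
  have "(l2norm r (mat_app A c f))\<^sup>2 \<le> (opnorm A * l2norm c f)\<^sup>2"
    using l2norm_mat_app_le[OF assms] l2norm_nonneg by (intro power_mono) auto
  then show ?thesis by (simp add: l2norm_power2 power_mult_distrib)
qed

lemma opnorm_le_power2I:
  assumes "A \<in> carrier_mat r c" "0 \<le> t"
    and "\<And>f. (\<Sum>i<r. (cmod (mat_app A c f i))\<^sup>2) \<le> t\<^sup>2 * (\<Sum>j<c. (cmod (f j))\<^sup>2)"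
  shows "opnorm A \<le> t"
proof (rule opnorm_leI[OF assms(1)])
  fix f assume "l2norm c f \<le> 1"
  then have "(\<Sum>j<c. (cmod (f j))\<^sup>2) \<le> 1" by (simp add: l2norm_le_1_iff)
  then have "(l2norm r (mat_app A c f))\<^sup>2 \<le> t\<^sup>2"
    using assms(3)[of f] unfolding l2norm_power2
    by (meson mult_left_le order_trans zero_le_power2)
  then show "l2norm r (mat_app A c f) \<le> t"
    using assms(2) by (rule power2_le_imp_le)
qed

lemma mat_app_ampl:
  assumes F: "lin_map F d1 d2" and i: "i < d1*k"
  shows "mat_app (ampl F d1 d2 k A) (d1*k) f i = (\<Sum>p<d2. \<Sum>q<d2. \<Sum>y<d1.
      F (munit d2 p q) $$ (i div k, y) * mat_app A (d2*k) (embed_block k q (segment k y f)) (p*k + i mod k))"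
proof -
  define G where "G p q = F (munit d2 p q)" for p q
  have entry: "ampl F d1 d2 k A $$ (i, y*k+c)
      = (\<Sum>p<d2. \<Sum>q<d2. A $$ (p*k + i mod k, q*k + c) * G p q $$ (i div k, y))"
    if "y < d1" "c < k" for y c
  proof -
    have "y*k + c < d1*k" using that by (rule mult_add_less_mult)
    then show ?thesis
      using i that lin_map_index_expansion[OF F blk_carrier less_mult_imp_div_less[OF i] \<open>y < d1\<close>]
      by (simp add: index_ampl blk_index G_def)
  qed
  have "mat_app (ampl F d1 d2 k A) (d1*k) f i
      = (\<Sum>y<d1. \<Sum>c<k. \<Sum>p<d2. \<Sum>q<d2. G p q $$ (i div k, y) * (A $$ (p*k + i mod k, q*k + c) * f (y*k+c)))"
    unfolding mat_app_def sum_lessThan_mult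
    by (intro sum.cong refl) (simp add: entry sum_distrib_left sum_distrib_right mult_ac)
  also have "\<dots> = (\<Sum>p<d2. \<Sum>q<d2. \<Sum>y<d1. \<Sum>c<k. G p q $$ (i div k, y) * (A $$ (p*k + i mod k, q*k + c) * f (y*k+c)))"
    by (subst sum.swap, subst (2) sum.swap, subst (3) sum.swap, subst (2) sum.swap, rule refl)
  also have "\<dots> = (\<Sum>p<d2. \<Sum>q<d2. \<Sum>y<d1.
      G p q $$ (i div k, y) * mat_app A (d2*k) (embed_block k q (segment k y f)) (p*k + i mod k))"
    by (intro sum.cong refl) (simp add: mat_app_embed_block segment_def sum_distrib_left)
  finally show ?thesis by (simp add: G_def)
qed

lemma l2norm_ampl_term_le:
  assumes A: "A \<in> carrier_mat (d2*k) (d2*k)" "opnorm A \<le> 1"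
    and f: "l2norm (d1*k) f \<le> 1" and pqy: "p < d2" "q < d2" "y < d1"
    and G: "\<And>x. x < d1 \<Longrightarrow> cmod (G $$ (x,y)) \<le> g"
  shows "l2norm (d1*k) (\<lambda>i. G $$ (i div k, y)
           * mat_app A (d2*k) (embed_block k q (segment k y f)) (p*k + i mod k)) \<le> sqrt (real d1) * g"
proof -
  define u where "u = embed_block k q (segment k y f)"
  define h where "h r = (cmod (mat_app A (d2*k) u r))\<^sup>2" for r
  have g: "0 \<le> g" using G[OF pqy(3)] norm_ge_zero order_trans by blast
  have dm: "(x*k+b) div k = x" "(x*k+b) mod k = b" if "b < k" for x b
    using that by auto
  have "(l2norm (d1*k) (\<lambda>i. G $$ (i div k, y) * mat_app A (d2*k) u (p*k + i mod k)))\<^sup>2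
      = (\<Sum>x<d1. \<Sum>b<k. (cmod (G $$ (x,y)))\<^sup>2 * h (p*k+b))"
    unfolding l2norm_power2 sum_lessThan_mult h_def
    by (intro sum.cong refl) (simp add: dm norm_mult power_mult_distrib)
  also have "\<dots> \<le> (\<Sum>x<d1. \<Sum>b<k. g\<^sup>2 * h (p*k+b))"
    using G g by (intro sum_mono mult_right_mono power_mono) (auto simp: h_def)
  also have "\<dots> = real d1 * g\<^sup>2 * (\<Sum>b<k. h (p*k+b))"
    by (simp add: sum_distrib_left mult.assoc)
  also have "\<dots> \<le> real d1 * g\<^sup>2 * (\<Sum>r<d2*k. h r)"
    using pqy by (intro mult_left_mono sum_block_le) (auto simp: h_def)
  also have "\<dots> \<le> real d1 * g\<^sup>2 * (\<Sum>c<k. (cmod (segment k y f c))\<^sup>2)"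
  proof (intro mult_left_mono)
    have "(\<Sum>r<d2*k. h r) \<le> (opnorm A)\<^sup>2 * (\<Sum>r<d2*k. (cmod (u r))\<^sup>2)"
      unfolding h_def by (rule sum_power2_mat_app_le[OF A(1)])
    also have "\<dots> \<le> (\<Sum>r<d2*k. (cmod (u r))\<^sup>2)"
      using A(2) opnorm_nonneg[OF A(1)] by (intro mult_left_le_one_le sum_nonneg) (auto simp: power_le_one)
    finally show "(\<Sum>r<d2*k. h r) \<le> (\<Sum>c<k. (cmod (segment k y f c))\<^sup>2)"
      unfolding u_def sum_power2_embed_block[OF pqy(2)] .
  qed simp
  also have "\<dots> \<le> real d1 * g\<^sup>2 * 1"
    using sum_power2_segment_le[OF pqy(3), of k f] f
    by (intro mult_left_mono) (auto simp: l2norm_le_1_iff)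
  also have "\<dots> = (sqrt (real d1) * g)\<^sup>2"
    by (simp add: power_mult_distrib)
  finally have "(l2norm (d1*k) (\<lambda>i. G $$ (i div k, y) * mat_app A (d2*k) u (p*k + i mod k)))\<^sup>2
      \<le> (sqrt (real d1) * g)\<^sup>2" .
  then show ?thesis
    unfolding u_def by (rule power2_le_imp_le) (simp add: g)
qed

lemma norm_index_le_sum:
  fixes G :: "complex mat"
  assumes "x < n" "y < n"
  shows "cmod (G $$ (x,y)) \<le> (\<Sum>x'<n. \<Sum>y'<n. cmod (G $$ (x',y')))"
proof -
  have "cmod (G $$ (x,y)) \<le> (\<Sum>y'<n. cmod (G $$ (x,y')))"
    using assms by (intro member_le_sum) auto
  also have "\<dots> \<le> (\<Sum>x'<n. \<Sum>y'<n. cmod (G $$ (x',y')))"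
    using assms by (intro member_le_sum[where f="\<lambda>x'. \<Sum>y'<n. cmod (G $$ (x',y'))"] sum_nonneg) auto
  finally show ?thesis .
qed

lemma ampl_opnorm_bounded:
  assumes F: "lin_map F d1 d2"
  shows "\<exists>C. \<forall>k A. 0 < k \<longrightarrow> A \<in> carrier_mat (d2*k) (d2*k) \<longrightarrow> opnorm A \<le> 1 \<longrightarrow>
           opnorm (ampl F d1 d2 k A) \<le> C"
proof -
  define g where "g p q = (\<Sum>x<d1. \<Sum>y<d1. cmod (F (munit d2 p q) $$ (x,y)))" for p q
  define C where "C = (\<Sum>p<d2. \<Sum>q<d2. \<Sum>y<d1. sqrt (real d1) * g p q)"
  have "opnorm (ampl F d1 d2 k A) \<le> C"
    if A: "A \<in> carrier_mat (d2*k) (d2*k)" "opnorm A \<le> 1" for k A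
  proof (rule opnorm_leI[OF ampl_carrier])
    fix f assume f: "l2norm (d1*k) f \<le> 1"
    define T where "T p q y i = F (munit d2 p q) $$ (i div k, y)
      * mat_app A (d2*k) (embed_block k q (segment k y f)) (p*k + i mod k)" for p q y i
    have "l2norm (d1*k) (mat_app (ampl F d1 d2 k A) (d1*k) f)
        = l2norm (d1*k) (\<lambda>i. \<Sum>p<d2. \<Sum>q<d2. \<Sum>y<d1. T p q y i)"
      unfolding T_def by (intro l2norm_cong mat_app_ampl[OF F])
    also have "\<dots> \<le> (\<Sum>p<d2. l2norm (d1*k) (\<lambda>i. \<Sum>q<d2. \<Sum>y<d1. T p q y i))"
      by (rule l2norm_sum_le) simp
    also have "\<dots> \<le> (\<Sum>p<d2. \<Sum>q<d2. l2norm (d1*k) (\<lambda>i. \<Sum>y<d1. T p q y i))"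
      by (intro sum_mono l2norm_sum_le) simp
    also have "\<dots> \<le> (\<Sum>p<d2. \<Sum>q<d2. \<Sum>y<d1. l2norm (d1*k) (T p q y))"
      by (intro sum_mono l2norm_sum_le) simp
    also have "\<dots> \<le> C"
      unfolding C_def T_def g_def using A f
      by (intro sum_mono l2norm_ampl_term_le norm_index_le_sum) auto
    finally show "l2norm (d1*k) (mat_app (ampl F d1 d2 k A) (d1*k) f) \<le> C" .
  qed
  then show ?thesis by blast
qed

lemma cb_norm_upper:
  assumes "lin_map S d1 d2" "0 < k" "A \<in> carrier_mat (d2*k) (d2*k)" "opnorm A \<le> 1"
  shows "opnorm (ampl S d1 d2 k A) \<le> cb_norm S d1 d2"
proof -
  obtain C where C: "\<forall>k A. 0 < k \<longrightarrow> A \<in> carrier_mat (d2*k) (d2*k) \<longrightarrow> opnorm A \<le> 1 \<longrightarrow>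
      opnorm (ampl S d1 d2 k A) \<le> C"
    using ampl_opnorm_bounded[OF assms(1)] by blast
  show ?thesis
    unfolding cb_norm_def using assms C
    by (intro cSup_upper) (auto intro!: bdd_aboveI[where M=C])
qed

lemma cb_norm_least:
  assumes "\<And>k A. 0 < k \<Longrightarrow> A \<in> carrier_mat (d2*k) (d2*k) \<Longrightarrow> opnorm A \<le> 1 \<Longrightarrow>
      opnorm (ampl S d1 d2 k A) \<le> t"
  shows "cb_norm S d1 d2 \<le> t"
  unfolding cb_norm_def using assms
  by (intro cSup_least) (auto intro!: exI[of _ 1] exI[of _ "0\<^sub>m d2 d2"] simp: opnorm_zero_mat)

lemma cb_norm_nonneg:
  assumes "lin_map S d1 d2"
  shows "0 \<le> cb_norm S d1 d2"
  using cb_norm_upper[OF assms, of 1 "0\<^sub>m d2 d2"] opnorm_nonneg[OF ampl_carrier]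
  by (simp add: opnorm_zero_mat) (meson order_trans)

lemma opnorm_ampl_corner_le:
  assumes mM: "m \<le> M" and X: "X \<in> carrier_mat (M*k) (M*k)"
  shows "opnorm (ampl (corner m) m M k X) \<le> opnorm X"
proof (rule opnorm_leI[OF ampl_carrier])
  fix f assume f: "l2norm (m*k) f \<le> 1"
  define f' where "f' j = (if j < m*k then f j else 0)" for j
  have le: "m*k \<le> M*k" using mM by simp
  have "mat_app (ampl (corner m) m M k X) (m*k) f i = mat_app X (M*k) f' i" if "i < m*k" for i
  proof -
    have "mat_app (ampl (corner m) m M k X) (m*k) f i = (\<Sum>j<M*k. if j < m*k then X $$ (i,j) * f j else 0)"
      unfolding mat_app_def sum_lessThan_if_less[OF le] using that
      by (intro sum.cong refl) (simp add: index_ampl_corner[OF mM])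
    then show ?thesis by (simp add: mat_app_def f'_def if_distrib[of "\<lambda>x. _ * x"] cong: if_cong)
  qed
  then have "l2norm (m*k) (mat_app (ampl (corner m) m M k X) (m*k) f) = l2norm (m*k) (mat_app X (M*k) f')"
    by (rule l2norm_cong)
  also have "\<dots> \<le> l2norm (M*k) (mat_app X (M*k) f')"
    unfolding l2norm_le_iff using le by (intro sum_mono2) auto
  also have "\<dots> \<le> opnorm X * l2norm (M*k) f'"
    by (rule l2norm_mat_app_le[OF X])
  also have "l2norm (M*k) f' = l2norm (m*k) f"
    unfolding l2norm_def L2_set_def f'_def
    by (simp add: if_distrib[of "\<lambda>x. (cmod x)\<^sup>2"] sum_lessThan_if_less[OF le] cong: if_cong)
  also have "opnorm X * l2norm (m*k) f \<le> opnorm X"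
    using f opnorm_nonneg[OF X] by (simp add: mult_left_le)
  finally show "l2norm (m*k) (mat_app (ampl (corner m) m M k X) (m*k) f) \<le> opnorm X" .
qed

lemma mat_app_ampl_pad_low:
  assumes m: "0 < m" "m \<le> M" and "x < m" "b < k"
  shows "mat_app (ampl (pad M m) M m k A) (M*k) f (x*k+b) = mat_app A (m*k) f (x*k+b)"
proof -
  have i: "x*k+b < M*k" using assms by (intro mult_add_less_mult) auto
  have "mat_app (ampl (pad M m) M m k A) (M*k) f (x*k+b)
      = (\<Sum>y<M. \<Sum>c<k. if y < m then A $$ (x*k+b, y*k+c) * f (y*k+c) else 0)"
    unfolding mat_app_def sum_lessThan_mult using assms i
    by (intro sum.cong refl) (simp add: index_ampl_pad[OF m] mult_add_less_mult)
  also have "\<dots> = (\<Sum>y<M. if y < m then (\<Sum>c<k. A $$ (x*k+b, y*k+c) * f (y*k+c)) else 0)"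
    by (intro sum.cong refl) auto
  also have "\<dots> = mat_app A (m*k) f (x*k+b)"
    unfolding sum_lessThan_if_less[OF m(2)] mat_app_def sum_lessThan_mult ..
  finally show ?thesis .
qed

lemma mat_app_ampl_pad_high:
  assumes m: "0 < m" "m \<le> x" "x < M" "b < k"
  shows "mat_app (ampl (pad M m) M m k A) (M*k) f (x*k+b)
       = mat_app A (m*k) (embed_block k 0 (segment k x f)) b"
proof -
  have mM: "m \<le> M" using m by simp
  have i: "x*k+b < M*k" using assms by (intro mult_add_less_mult) auto
  have "mat_app (ampl (pad M m) M m k A) (M*k) f (x*k+b)
      = (\<Sum>y<M. if y = x then (\<Sum>c<k. A $$ (b, c) * f (x*k+c)) else 0)"
    unfolding mat_app_def sum_lessThan_mult using assms i
    by (intro sum.cong refl) (auto simp: index_ampl_pad[OF m(1) mM] mult_add_less_mult)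
  also have "\<dots> = mat_app A (m*k) (embed_block k 0 (segment k x f)) b"
    using m by (simp add: mat_app_embed_block segment_def)
  finally show ?thesis .
qed

lemma sum_power2_ampl_pad_high_le:
  assumes m: "0 < m" "m \<le> x" "x < M" and A: "A \<in> carrier_mat (m*k) (m*k)"
  shows "(\<Sum>b<k. (cmod (mat_app (ampl (pad M m) M m k A) (M*k) f (x*k+b)))\<^sup>2)
       \<le> (opnorm A)\<^sup>2 * (\<Sum>c<k. (cmod (f (x*k+c)))\<^sup>2)"
proof -
  define w where "w = embed_block k 0 (segment k x f)"
  have "(\<Sum>b<k. (cmod (mat_app (ampl (pad M m) M m k A) (M*k) f (x*k+b)))\<^sup>2)
      = (\<Sum>b<k. (cmod (mat_app A (m*k) w b))\<^sup>2)"
    unfolding w_def using m by (simp add: mat_app_ampl_pad_high)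
  also have "\<dots> \<le> (\<Sum>r<m*k. (cmod (mat_app A (m*k) w r))\<^sup>2)"
    using m by (intro sum_mono2) auto
  also have "\<dots> \<le> (opnorm A)\<^sup>2 * (\<Sum>r<m*k. (cmod (w r))\<^sup>2)"
    by (rule sum_power2_mat_app_le[OF A])
  also have "(\<Sum>r<m*k. (cmod (w r))\<^sup>2) = (\<Sum>c<k. (cmod (f (x*k+c)))\<^sup>2)"
    unfolding w_def sum_power2_embed_block[OF m(1)] by (simp add: segment_def)
  finally show ?thesis .
qed

lemma opnorm_ampl_pad_le:
  assumes m: "0 < m" "m \<le> M" and A: "A \<in> carrier_mat (m*k) (m*k)"
  shows "opnorm (ampl (pad M m) M m k A) \<le> opnorm A"
proof (rule opnorm_le_power2I[OF ampl_carrier opnorm_nonneg[OF A]])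
  fix f
  define J where "J = ampl (pad M m) M m k A"
  define F where "F x = (\<Sum>c<k. (cmod (f (x*k+c)))\<^sup>2)" for x
  have sum_F: "(\<Sum>j<n*k. (cmod (f j))\<^sup>2) = (\<Sum>x<n. F x)" for n
    unfolding F_def by (rule sum_lessThan_mult)
  have split: "(\<Sum>x<M. h x) = (\<Sum>x<m. h x) + (\<Sum>x\<in>{m..<M}. h x)" for h :: "nat \<Rightarrow> real"
    using m(2) by (metis atLeast0LessThan sum.atLeastLessThan_concat zero_le)
  have "(\<Sum>x<m. \<Sum>b<k. (cmod (mat_app J (M*k) f (x*k+b)))\<^sup>2) = (\<Sum>i<m*k. (cmod (mat_app A (m*k) f i))\<^sup>2)"
    unfolding J_def sum_lessThan_mult using m by (simp add: mat_app_ampl_pad_low)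
  also have "\<dots> \<le> (opnorm A)\<^sup>2 * (\<Sum>x<m. F x)"
    unfolding sum_F[symmetric] by (rule sum_power2_mat_app_le[OF A])
  finally have low: "(\<Sum>x<m. \<Sum>b<k. (cmod (mat_app J (M*k) f (x*k+b)))\<^sup>2) \<le> (opnorm A)\<^sup>2 * (\<Sum>x<m. F x)" .
  have "(\<Sum>i<M*k. (cmod (mat_app J (M*k) f i))\<^sup>2)
      = (\<Sum>x<m. \<Sum>b<k. (cmod (mat_app J (M*k) f (x*k+b)))\<^sup>2)
        + (\<Sum>x\<in>{m..<M}. \<Sum>b<k. (cmod (mat_app J (M*k) f (x*k+b)))\<^sup>2)"
    unfolding sum_lessThan_mult by (rule split)
  also have "\<dots> \<le> (opnorm A)\<^sup>2 * (\<Sum>x<m. F x) + (\<Sum>x\<in>{m..<M}. (opnorm A)\<^sup>2 * F x)"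
    using low sum_power2_ampl_pad_high_le[OF m(1) _ _ A] unfolding J_def F_def
    by (intro add_mono sum_mono) auto
  also have "\<dots> = (opnorm A)\<^sup>2 * (\<Sum>j<M*k. (cmod (f j))\<^sup>2)"
    unfolding sum_F split by (simp add: sum_distrib_left distrib_left)
  finally show "(\<Sum>i<M*k. (cmod (mat_app (ampl (pad M m) M m k A) (M*k) f i))\<^sup>2)
      \<le> (opnorm A)\<^sup>2 * (\<Sum>j<M*k. (cmod (f j))\<^sup>2)"
    unfolding J_def .
qed

section \<open>Monotonicity of the coding error\<close>

lemma blk_tensor_id:
  assumes "X \<in> carrier_mat b b" "\<beta> < e" "\<gamma> < e"
  shows "blk b e (tensor_id b e X) \<beta> \<gamma> = (if \<beta> = \<gamma> then X else 0\<^sub>m b b)"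
  using assms mult_add_less_mult
  by (intro eq_matI) (auto simp: blk_index tensor_id_def blk_def)

lemma channel_sum_munit_diag:
  assumes T: "channel T d1 d2" and "0 < d1"
  shows "(\<Sum>\<beta><d2. T (munit d2 \<beta> \<beta>) $$ (0,0)) = 1"
proof -
  have "1 = T (1\<^sub>m d2) $$ (0,0)" using T assms(2) by (simp add: channel_def)
  also have "\<dots> = (\<Sum>p<d2. \<Sum>q<d2. 1\<^sub>m d2 $$ (p,q) * T (munit d2 p q) $$ (0,0))"
    using assms by (intro lin_map_index_expansion[OF channel_lin_map[OF T]]) auto
  also have "\<dots> = (\<Sum>p<d2. \<Sum>q<d2. if p = q then T (munit d2 p q) $$ (0,0) else 0)"
    by (intro sum.cong refl) auto
  finally show ?thesis by simp
qed

text \<open>The second factor contributes \<open>T(1)\<^sub>0\<^sub>0 = 1\<close>; this is where unitality of \<open>T\<close> is used.\<close>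

lemma ancilla_e0_map_tensor_tensor_id:
  assumes S: "lin_map S a b" and T: "channel T d1 d2" and pos: "0 < d1" "0 < d2"
    and X: "X \<in> carrier_mat b b"
  shows "ancilla_e0 a d1 (map_tensor S a b T d1 d2 (tensor_id b d2 X)) = S X"
proof (rule eq_matI)
  have SX: "S X \<in> carrier_mat a a" using lin_map_carrier[OF S X] .
  fix x y assume "x < dim_row (S X)" "y < dim_col (S X)"
  then have xy: "x < a" "y < a" using SX by auto
  have "ancilla_e0 a d1 (map_tensor S a b T d1 d2 (tensor_id b d2 X)) $$ (x,y)
      = (\<Sum>\<beta><d2. \<Sum>\<gamma><d2. S (blk b d2 (tensor_id b d2 X) \<beta> \<gamma>) $$ (x, y) * T (munit d2 \<beta> \<gamma>) $$ (0, 0))"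
    using xy pos mult_add_less_mult[OF xy(1) pos(1)] mult_add_less_mult[OF xy(2) pos(1)]
    by (simp add: ancilla_e0_def blk_index map_tensor_def)
  also have "\<dots> = (\<Sum>\<beta><d2. \<Sum>\<gamma><d2. if \<beta> = \<gamma> then S X $$ (x,y) * T (munit d2 \<beta> \<gamma>) $$ (0, 0) else 0)"
    using xy lin_map_zero[OF S] by (intro sum.cong refl) (auto simp: blk_tensor_id[OF X])
  also have "\<dots> = S X $$ (x,y) * (\<Sum>\<beta><d2. T (munit d2 \<beta> \<beta>) $$ (0, 0))"
    by (simp add: sum_distrib_left)
  finally show "ancilla_e0 a d1 (map_tensor S a b T d1 d2 (tensor_id b d2 X)) $$ (x,y) = S X $$ (x,y)"
    by (simp add: channel_sum_munit_diag[OF T pos(1)])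
qed (use lin_map_carrier[OF S X] in \<open>auto simp: ancilla_e0_def blk_def\<close>)

lemma lin_map_coding_error:
  assumes "lin_map S d1 d2" "channel D d2 M" "channel E M d1"
  shows "lin_map (\<lambda>A. E (S (D A)) - A) M M"
  using lin_map_minus_id[OF lin_map_comp[OF channel_lin_map[OF assms(3)]
        lin_map_comp[OF assms(1) channel_lin_map[OF assms(2)]]]] .

lemma Delta_le_coding_error:
  assumes "lin_map S d1 d2" "channel D d2 M" "channel E M d1"
  shows "Delta S d1 d2 M \<le> cb_norm (\<lambda>A. E (S (D A)) - A) M M"
  unfolding Delta_def using assms
  by (intro cInf_lower) (blast, fastforce intro!: bdd_belowI[where m=0] cb_norm_nonneg
      intro: lin_map_coding_error[OF assms(1)])

lemma Delta_greatest:
  assumes "0 < d1" "0 < d2" "0 < M"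
    and "\<And>E D. channel D d2 M \<Longrightarrow> channel E M d1 \<Longrightarrow> t \<le> cb_norm (\<lambda>A. E (S (D A)) - A) M M"
  shows "t \<le> Delta S d1 d2 M"
  unfolding Delta_def using assms channel_prepare_e0[of d2 M] channel_prepare_e0[of M d1]
  by (intro cInf_greatest) auto

lemma Delta_nonneg:
  assumes "lin_map S d1 d2" "0 < d1" "0 < d2" "0 < M"
  shows "0 \<le> Delta S d1 d2 M"
  using assms cb_norm_nonneg[OF lin_map_coding_error[OF assms(1)]] by (intro Delta_greatest) auto

lemma Delta_map_tensor_le:
  assumes S: "lin_map S a b" and T: "channel T d1 d2"
    and pos: "0 < a" "0 < b" "0 < d1" "0 < d2" "0 < M"
  shows "Delta (map_tensor S a b T d1 d2) (a*d1) (b*d2) M \<le> Delta S a b M"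
proof (rule Delta_greatest[OF pos(1,2,5)])
  fix E D assume D: "channel D b M" and E: "channel E M a"
  have D': "channel (\<lambda>X. tensor_id b d2 (D X)) (b*d2) M"
    by (rule channel_comp[OF channel_tensor_id[OF pos(2,4)] D])
  have E': "channel (\<lambda>Y. E (ancilla_e0 a d1 Y)) M (a*d1)"
    by (rule channel_comp[OF E channel_ancilla_e0[OF pos(1,3)]])
  have "Delta (map_tensor S a b T d1 d2) (a*d1) (b*d2) M
      \<le> cb_norm (\<lambda>A. E (ancilla_e0 a d1 (map_tensor S a b T d1 d2 (tensor_id b d2 (D A)))) - A) M M"
    by (rule Delta_le_coding_error[OF lin_map_tensor[OF S] D' E'])
  also have "\<dots> = cb_norm (\<lambda>A. E (S (D A)) - A) M M"
    using lin_map_carrier[OF channel_lin_map[OF D]]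
    by (intro cb_norm_cong) (simp add: ancilla_e0_map_tensor_tensor_id[OF S T pos(3,4)])
  finally show "Delta (map_tensor S a b T d1 d2) (a*d1) (b*d2) M \<le> cb_norm (\<lambda>A. E (S (D A)) - A) M M" .
qed

lemma cb_norm_corner_pad_le:
  assumes F: "lin_map F M M" and m: "0 < m" "m \<le> M"
  shows "cb_norm (\<lambda>A. corner m (F (pad M m A))) m m \<le> cb_norm F M M"
proof (rule cb_norm_least)
  fix k A assume k: "0 < k" and A: "A \<in> carrier_mat (m*k) (m*k)" and A1: "opnorm A \<le> 1"
  have pad_carrier: "\<And>X. X \<in> carrier_mat m m \<Longrightarrow> pad M m X \<in> carrier_mat M M"
    by (simp add: pad_def)
  have F_pad_carrier: "\<And>X. X \<in> carrier_mat m m \<Longrightarrow> F (pad M m X) \<in> carrier_mat M M"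
    using lin_map_carrier[OF F] pad_carrier by blast
  have "ampl (\<lambda>A. corner m (F (pad M m A))) m m k A
      = ampl (corner m) m M k (ampl (\<lambda>X. F (pad M m X)) M m k A)"
    by (rule ampl_comp[OF F_pad_carrier])
  also have "\<dots> = ampl (corner m) m M k (ampl F M M k (ampl (pad M m) M m k A))"
    using ampl_comp[OF pad_carrier, where F=F and a=M and k=k and A=A] by simp
  finally have "opnorm (ampl (\<lambda>A. corner m (F (pad M m A))) m m k A)
      = opnorm (ampl (corner m) m M k (ampl F M M k (ampl (pad M m) M m k A)))" by simp
  also have "\<dots> \<le> opnorm (ampl F M M k (ampl (pad M m) M m k A))"
    by (rule opnorm_ampl_corner_le[OF m(2) ampl_carrier])
  also have "\<dots> \<le> cb_norm F M M"
    using opnorm_ampl_pad_le[OF m A] A1 by (intro cb_norm_upper[OF F k ampl_carrier]) simp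
  finally show "opnorm (ampl (\<lambda>A. corner m (F (pad M m A))) m m k A) \<le> cb_norm F M M" .
qed

lemma Delta_mono:
  assumes S: "lin_map S a b" and pos: "0 < a" "0 < b" "0 < m" "m \<le> M"
  shows "Delta S a b m \<le> Delta S a b M"
proof (rule Delta_greatest)
  show "0 < a" "0 < b" "0 < M" using pos by auto
  fix E D assume D: "channel D b M" and E: "channel E M a"
  define F where "F A = E (S (D A)) - A" for A
  have D': "channel (\<lambda>X. D (pad M m X)) b m"
    by (rule channel_comp[OF D channel_pad[OF pos(3,4)]])
  have E': "channel (\<lambda>Y. corner m (E Y)) m a"
    by (rule channel_comp[OF channel_corner[OF pos(3,4)] E])
  have "Delta S a b m \<le> cb_norm (\<lambda>A. corner m (E (S (D (pad M m A)))) - A) m m"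
    by (rule Delta_le_coding_error[OF S D' E'])
  also have "\<dots> = cb_norm (\<lambda>A. corner m (F (pad M m A))) m m"
  proof (rule cb_norm_cong)
    fix A :: "complex mat" assume A: "A \<in> carrier_mat m m"
    have pA: "pad M m A \<in> carrier_mat M M" by (simp add: pad_def)
    have "E (S (D (pad M m A))) \<in> carrier_mat M M"
      using lin_map_carrier[OF lin_map_comp[OF channel_lin_map[OF E] lin_map_comp[OF S channel_lin_map[OF D]]] pA] .
    moreover have "corner m (pad M m A) = A"
      using A pos(4) by (intro eq_matI) (auto simp: corner_def pad_def)
    ultimately show "corner m (E (S (D (pad M m A)))) - A = corner m (F (pad M m A))"
      unfolding F_def using lin_map_diff[OF channel_lin_map[OF channel_corner[OF pos(3,4)]] _ pA] by simp
  qed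
  also have "\<dots> \<le> cb_norm F M M"
    unfolding F_def by (rule cb_norm_corner_pad_le[OF lin_map_coding_error[OF S D E] pos(3,4)])
  finally show "Delta S a b m \<le> cb_norm (\<lambda>A. E (S (D A)) - A) M M"
    unfolding F_def .
qed

lemma DeltaPow_nonneg:
  assumes "0 < d1" "0 < d2" "0 < M"
  shows "0 \<le> DeltaPow T d1 d2 n M"
  unfolding DeltaPow_def using assms by (intro Delta_nonneg lin_map_tpow) auto

lemma DeltaPow_Suc_le:
  assumes T: "channel T d1 d2" and pos: "0 < d1" "0 < d2" "0 < M"
  shows "DeltaPow T d1 d2 (Suc n) M \<le> DeltaPow T d1 d2 n M"
proof -
  have "DeltaPow T d1 d2 (Suc n) M
      = Delta (map_tensor (tpow T d1 d2 n) (d1^n) (d2^n) T d1 d2) (d1^n*d1) (d2^n*d2) M"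
    by (simp add: DeltaPow_def mult.commute)
  also have "\<dots> \<le> DeltaPow T d1 d2 n M"
    unfolding DeltaPow_def using pos by (intro Delta_map_tensor_le[OF lin_map_tpow T]) auto
  finally show ?thesis .
qed

lemma DeltaPow_le:
  assumes T: "channel T d1 d2" and pos: "0 < d1" "0 < d2"
    and "n' \<le> n" "0 < m" "m \<le> m'"
  shows "DeltaPow T d1 d2 n m \<le> DeltaPow T d1 d2 n' m'"
proof -
  have "DeltaPow T d1 d2 n m \<le> DeltaPow T d1 d2 n' m"
    using \<open>n' \<le> n\<close>
  proof (induct n rule: dec_induct)
    case (step n)
    then show ?case using DeltaPow_Suc_le[OF T pos \<open>0 < m\<close>, of n] by linarith
  qed simp
  also have "\<dots> \<le> DeltaPow T d1 d2 n' m'"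
    unfolding DeltaPow_def using assms by (intro Delta_mono lin_map_tpow) auto
  finally show ?thesis .
qed

section \<open>Interpolating the block lengths\<close>

text \<open>For \<open>k < n 0\<close> the set below is empty and \<open>Max\<close> gives an unspecified value.\<close>

definition index_below :: "(nat \<Rightarrow> nat) \<Rightarrow> nat \<Rightarrow> nat" where
  "index_below n k = Max {a. n a \<le> k}"

lemma index_below:
  assumes n: "strict_mono n" and k: "n 0 \<le> k"
  shows "n (index_below n k) \<le> k" "k < n (Suc (index_below n k))"
proof -
  have "{a. n a \<le> k} \<subseteq> {..k}"
    using seq_suble[OF n] by (auto intro: le_trans)
  then have fin: "finite {a. n a \<le> k}"
    by (rule finite_subset) simp
  have "index_below n k \<in> {a. n a \<le> k}"
    unfolding index_below_def using k by (intro Max_in[OF fin]) auto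
  then show "n (index_below n k) \<le> k" by simp
  show "k < n (Suc (index_below n k))"
  proof (rule ccontr)
    assume "\<not> k < n (Suc (index_below n k))"
    then have "Suc (index_below n k) \<le> Max {a. n a \<le> k}"
      by (intro Max_ge[OF fin]) simp
    then show False by (simp add: index_below_def)
  qed
qed

lemma filterlim_index_below:
  assumes n: "strict_mono n"
  shows "filterlim (index_below n) at_top sequentially"
  unfolding filterlim_at_top eventually_sequentially
proof
  fix a
  have "a \<le> index_below n k" if "n a \<le> k" for k
  proof -
    have "n 0 \<le> k" using that strict_mono_less_eq[OF n, of 0 a] by simp
    then have "n a < n (Suc (index_below n k))" using index_below(2)[OF n] that le_less_trans by blast
    then show ?thesis using strict_mono_less[OF n] by simp
  qed
  then show "\<exists>N. \<forall>k\<ge>N. a \<le> index_below n k" by blast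
qed

lemma index_below_ratio:
  assumes n: "strict_mono n" and npos: "\<forall>a. 0 < n a"
    and ratio: "(\<lambda>a. real (n (Suc a)) / real (n a)) \<longlonglongrightarrow> 1"
  shows "(\<lambda>k. real (n (index_below n k)) / real k) \<longlonglongrightarrow> 1"
proof (rule tendsto_sandwich[of "\<lambda>k. real (n (index_below n k)) / real (n (Suc (index_below n k)))" _ _ "\<lambda>_. 1"])
  have bounds: "real (n (index_below n k)) / real (n (Suc (index_below n k))) \<le> real (n (index_below n k)) / real k
      \<and> real (n (index_below n k)) / real k \<le> 1" if "n 0 \<le> k" for k
  proof -
    have "0 < k" using that npos by (metis gr0I le_zero_eq)
    then show ?thesis using index_below[OF n that] by (auto intro: divide_left_mono)
  qed
  then show "\<forall>\<^sub>F k in sequentially. real (n (index_below n k)) / real (n (Suc (index_below n k)))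
      \<le> real (n (index_below n k)) / real k"
    and "\<forall>\<^sub>F k in sequentially. real (n (index_below n k)) / real k \<le> 1"
    unfolding eventually_sequentially by blast+
  have "(\<lambda>a. inverse (real (n (Suc a)) / real (n a))) \<longlonglongrightarrow> inverse 1"
    by (intro tendsto_inverse ratio) simp
  then have "(\<lambda>a. real (n a) / real (n (Suc a))) \<longlonglongrightarrow> 1" by simp
  then show "(\<lambda>k. real (n (index_below n k)) / real (n (Suc (index_below n k)))) \<longlonglongrightarrow> 1"
    by (rule filterlim_compose[OF _ filterlim_index_below[OF n]])
qed simp

lemma eventually_powr_less_index_below:
  fixes c :: real
  assumes n: "strict_mono n" and npos: "\<forall>a. 0 < n a"
    and ratio: "(\<lambda>a. real (n (Suc a)) / real (n a)) \<longlonglongrightarrow> 1"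
    and Mpos: "\<forall>a. 0 < M a" and c: "0 \<le> c"
    and rate: "ereal c < liminf (\<lambda>a. ereal (log 2 (real (M a)) / real (n a)))"
  shows "\<forall>\<^sub>F k in sequentially. 2 powr (c * real k) < real (M (index_below n k))"
proof -
  obtain c' where c': "c < c'" "ereal c' < liminf (\<lambda>a. ereal (log 2 (real (M a)) / real (n a)))"
    using ereal_dense2[OF rate] by auto
  have "\<forall>\<^sub>F a in sequentially. c' < log 2 (real (M a)) / real (n a)"
    using less_LiminfD[OF c'(2)] by simp
  moreover have "\<forall>\<^sub>F a in sequentially. c * (real (n (Suc a)) / real (n a)) < c'"
    using c'(1) by (intro order_tendstoD(2)[OF tendsto_mult_left[OF ratio]]) simp
  ultimately have "\<forall>\<^sub>F a in sequentially. c * real (n (Suc a)) < log 2 (real (M a))"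
  proof eventually_elim
    case (elim a)
    have "0 < real (n a)" using npos by simp
    then show ?case using elim by (simp add: field_simps)
  qed
  then have "\<forall>\<^sub>F k in sequentially. c * real (n (Suc (index_below n k))) < log 2 (real (M (index_below n k)))"
    by (rule filterlim_iff[THEN iffD1, OF filterlim_index_below[OF n], rule_format])
  moreover have "\<forall>\<^sub>F k in sequentially. k < n (Suc (index_below n k))"
    unfolding eventually_sequentially using index_below(2)[OF n] by blast
  ultimately show ?thesis
  proof eventually_elim
    case (elim k)
    then have "c * real k < log 2 (real (M (index_below n k)))"
      using c by (smt (verit) mult_left_mono of_nat_less_iff)
    then show ?case using Mpos by (simp add: less_log_iff)
  qed
qed

lemma nat_floor_powr_pos: "0 \<le> c \<Longrightarrow> 0 < nat \<lfloor>2 powr (c * real k)\<rfloor>"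
  by (simp add: one_le_floor ge_one_powr_ge_zero)

lemma eventually_DeltaPow_le_index_below:
  fixes c :: real
  assumes T: "channel T d1 d2" and pos: "0 < d1" "0 < d2"
    and n: "strict_mono n" and npos: "\<forall>a. 0 < n a"
    and ratio: "(\<lambda>a. real (n (Suc a)) / real (n a)) \<longlonglongrightarrow> 1"
    and Mpos: "\<forall>a. 0 < M a" and c: "0 \<le> c"
    and rate: "ereal c < liminf (\<lambda>a. ereal (log 2 (real (M a)) / real (n a)))"
  shows "\<forall>\<^sub>F k in sequentially. 0 \<le> DeltaPow T d1 d2 k (nat \<lfloor>2 powr (c * real k)\<rfloor>) \<and>
      DeltaPow T d1 d2 k (nat \<lfloor>2 powr (c * real k)\<rfloor>) \<le> DeltaPow T d1 d2 (n (index_below n k)) (M (index_below n k))"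
  using eventually_powr_less_index_below[OF n npos ratio Mpos c rate]
    eventually_ge_at_top[of "n 0"]
proof eventually_elim
  case (elim k)
  have "nat \<lfloor>2 powr (c * real k)\<rfloor> \<le> M (index_below n k)"
    using elim(1) by (simp add: nat_le_iff floor_less_iff less_imp_le)
  then show ?case
    using nat_floor_powr_pos[OF c] index_below(1)[OF n elim(2)]
    by (auto intro: DeltaPow_nonneg[OF pos] DeltaPow_le[OF T pos])
qed

lemma liminf_neglog_rate_ge:
  assumes bound: "\<forall>\<^sub>F k in sequentially. 0 \<le> x k \<and> x k \<le> \<mu> * exp (- lam * real (m k))"
    and ratio: "(\<lambda>k. real (m k) / real k) \<longlonglongrightarrow> 1"
  shows "ereal lam \<le> liminf (\<lambda>k. neglog_rate k (x k))"
proof -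
  define \<mu>1 where "\<mu>1 = max \<mu> 1"
  define g where "g k = lam * (real (m k) / real k) - ln \<mu>1 / real k" for k
  have "g \<longlonglongrightarrow> lam * 1 - 0"
    unfolding g_def by (intro tendsto_diff tendsto_mult tendsto_const ratio lim_const_over_n)
  then have "liminf (\<lambda>k. ereal (g k)) = ereal lam"
    by (intro lim_imp_Liminf) (auto simp: lim_ereal)
  moreover have "\<forall>\<^sub>F k in sequentially. ereal (g k) \<le> neglog_rate k (x k)"
    using bound eventually_gt_at_top[of 0]
  proof eventually_elim
    case (elim k)
    show ?case
    proof (cases "x k = 0")
      case False
      then have x: "0 < x k" using elim by simp
      have "x k \<le> \<mu>1 * exp (- lam * real (m k))"
        using elim by (smt (verit) \<mu>1_def exp_gt_zero mult_right_mono)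
      then have "ln (x k) \<le> ln (\<mu>1 * exp (- lam * real (m k)))"
        using x by simp
      also have "\<dots> = ln \<mu>1 - lam * real (m k)"
        by (simp add: \<mu>1_def ln_mult)
      finally have "(lam * real (m k) - ln \<mu>1) / real k \<le> - ln (x k) / real k"
        by (intro divide_right_mono) auto
      then have "g k \<le> - ln (x k) / real k"
        by (simp add: g_def diff_divide_distrib)
      then show ?thesis using False by (simp add: neglog_rate_def)
    qed (simp add: neglog_rate_def)
  qed
  then have "liminf (\<lambda>k. ereal (g k)) \<le> liminf (\<lambda>k. neglog_rate k (x k))"
    by (rule Liminf_mono)
  ultimately show ?thesis by simp
qed

lemma achievable_if_DeltaPow_dominated:
  assumes c: "0 \<le> c" and lim: "b \<longlonglongrightarrow> 0"
    and dom: "\<forall>\<^sub>F k in sequentially. 0 \<le> DeltaPow T d1 d2 k (nat \<lfloor>2 powr (c * real k)\<rfloor>) \<and>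
        DeltaPow T d1 d2 k (nat \<lfloor>2 powr (c * real k)\<rfloor>) \<le> b k"
  shows "achievable T d1 d2 c"
proof -
  have "\<forall>\<^sub>F k in sequentially. 0 \<le> DeltaPow T d1 d2 k (nat \<lfloor>2 powr (c * real k)\<rfloor>)"
    and "\<forall>\<^sub>F k in sequentially. DeltaPow T d1 d2 k (nat \<lfloor>2 powr (c * real k)\<rfloor>) \<le> b k"
    using dom by (simp_all add: eventually_conj_iff)
  from tendsto_sandwich[OF this tendsto_const lim] show ?thesis
    using c by (simp add: achievable_def)
qed

theorem lemma1:
  fixes T :: "complex mat \<Rightarrow> complex mat" and d1 d2 :: nat
    and n :: "nat \<Rightarrow> nat" and M :: "nat \<Rightarrow> nat"
  assumes "d1 > 0" and "d2 > 0"
    and "channel T d1 d2"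
    and "strict_mono n" and "\<forall>a. n a > 0"
    and "(\<lambda>a. real (n (Suc a)) / real (n a)) \<longlonglongrightarrow> 1"
    and "\<forall>a. M a > 0"
    and "(\<lambda>a. DeltaPow T d1 d2 (n a) (M a)) \<longlonglongrightarrow> 0"
  shows "(\<forall>c\<ge>0. ereal c < liminf (\<lambda>a. ereal (log 2 (real (M a)) / real (n a)))
            \<longrightarrow> achievable T d1 d2 c)
       \<and> (\<forall>\<mu> lam. \<mu> \<ge> 0 \<and> lam \<ge> 0 \<and>
            (\<forall>a. DeltaPow T d1 d2 (n a) (M a) \<le> \<mu> * exp (- lam * real (n a))) \<longrightarrow>
            (\<forall>c\<ge>0. ereal c < liminf (\<lambda>a. ereal (log 2 (real (M a)) / real (n a))) \<longrightarrow>
               liminf (\<lambda>k. neglog_rate k (DeltaPow T d1 d2 k (nat \<lfloor>2 powr (c * real k)\<rfloor>)))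
                 \<ge> ereal lam))"
proof -
  define \<alpha> where "\<alpha> = index_below n"
  define P where "P c k = DeltaPow T d1 d2 k (nat \<lfloor>2 powr (c * real k)\<rfloor>)" for c k
  have bound: "\<forall>\<^sub>F k in sequentially. 0 \<le> P c k \<and> P c k \<le> DeltaPow T d1 d2 (n (\<alpha> k)) (M (\<alpha> k))"
    if "0 \<le> c" "ereal c < liminf (\<lambda>a. ereal (log 2 (real (M a)) / real (n a)))" for c
    unfolding P_def \<alpha>_def by (rule eventually_DeltaPow_le_index_below[OF assms(3,1,2,4-7) that])
  have "(\<lambda>k. DeltaPow T d1 d2 (n (\<alpha> k)) (M (\<alpha> k))) \<longlonglongrightarrow> 0"
    unfolding \<alpha>_def using assms(8) by (rule filterlim_compose[OF _ filterlim_index_below[OF assms(4)]])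
  then have "achievable T d1 d2 c"
    if "0 \<le> c" "ereal c < liminf (\<lambda>a. ereal (log 2 (real (M a)) / real (n a)))" for c
    using bound[OF that] that(1) unfolding P_def by (intro achievable_if_DeltaPow_dominated)
  moreover have "ereal lam \<le> liminf (\<lambda>k. neglog_rate k (P c k))"
    if exp_bound: "\<forall>a. DeltaPow T d1 d2 (n a) (M a) \<le> \<mu> * exp (- lam * real (n a))"
      and c: "0 \<le> c" "ereal c < liminf (\<lambda>a. ereal (log 2 (real (M a)) / real (n a)))" for \<mu> lam c
  proof (rule liminf_neglog_rate_ge)
    show "\<forall>\<^sub>F k in sequentially. 0 \<le> P c k \<and> P c k \<le> \<mu> * exp (- lam * real (n (\<alpha> k)))"
      using bound[OF c]
    proof eventually_elim
      case (elim k)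
      then show ?case using exp_bound[rule_format, of "\<alpha> k"] by linarith
    qed
    show "(\<lambda>k. real (n (\<alpha> k)) / real k) \<longlonglongrightarrow> 1"
      unfolding \<alpha>_def using assms(4-6) by (rule index_below_ratio)
  qed
  ultimately show ?thesis unfolding P_def by auto
qed

end
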